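(* Fix an arm index $k\in[k^*]$ and $\sigma_k>0$. Let $\mathbb{P}_k(\sigma_k)$ be the class of distributions on $\mathbb{R}$ with variance $\sigma_k^2$ (and arbitrary finite mean). Let $\mathbb{V}$ and $\mathbb{T}$ be the classes of nonadaptive sampling algorithms and nonadaptive stopping rules, respectively, for which $N_k(T)\ge1$ almost surely. For $P_k\in\mathbb{P}_k(\sigma_k)$ with mean $\mu_k$, $\nu\in\mathbb{V}$ and $T\in\mathbb{T}$, let $Q=Q(P_k,\nu,T)$ denote the induced distribution of the observations when arm $k$ has distribution $P_k$, the sampling algorithm is $\nu$ and the stopping rule is $T$. Then $$\inf_{\hat\mu_k}\ \sup_{P_k\in\mathbb{P}_k(\sigma_k),\,\nu\in\mathbb{V},\,T\in\mathbb{T}}\ \mathbb{E}_Q\big[N_k(T)(\hat\mu_k(T)-\mu_k)^2\big]=\sigma_k^2,$$ where the infimum is over all estimators (measurable functions of the collected data). Moreover, for any $P_k\in\mathbb{P}_k(\sigma_k)$, $\nu\in\mathbb{V}$ and $T\in\mathbb{T}$, the sample mean satisfies $\mathbb{E}_Q[N_k(T)(\hat\mu_k(T)-\mu_k)^2]=\sigma_k^2$, so it achieves the minimax risk.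
   Context: Multi-armed bandit model: arms $P_1,\dots,P_{k^*}$ on $\mathbb{R}$ with finite means $\mu_k$. With $W$ an independent external random variable, at each time $t$, given $\mathcal{D}_{t-1}=\{W,A_1,Y_1,\dots,A_{t-1},Y_{t-1}\}$, an arm $A_t\in[k^*]$ is drawn with conditional probabilities $\nu_t(\cdot\mid\mathcal{D}_{t-1})$ and $Y_t$ is an independent draw from $P_{A_t}$; data collection stops at a time $T$. $N_k(t)=\sum_{s\le t}\mathbf{1}(A_s=k)$, $S_k(t)=\sum_{s\le t}\mathbf{1}(A_s=k)Y_s$, $\hat\mu_k(t)=S_k(t)/N_k(t)$. A sampling algorithm $\nu=\{\nu_t\}$ is nonadaptive if for each $t$, $\nu_t$ is independent of the observed arm values $Y_1,\dots,Y_{t-1}$ (it may depend on $A_1,\dots,A_{t-1}$ and $W$); a stopping rule $T$ is nonadaptive if it is independent of the arm values (e.g. deterministic, or $T=1+Z$ with $Z$ independent of everything else). *)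

theory Defs
  imports "HOL-Probability.Probability"
begin

text \<open>Canonical data space: an outcome is (W, A, Y) where W is the external
random variable, A i is the arm pulled at time i+1 and Y i the value observed
at time i+1 (0-based indices). Arms are 1..K.\<close>

type_synonym traj = "real \<times> (nat \<Rightarrow> nat) \<times> (nat \<Rightarrow> real)"

definition trajM :: "traj measure" where
  "trajM = borel \<Otimes>\<^sub>M ((\<Pi>\<^sub>M i\<in>UNIV. count_space UNIV) \<Otimes>\<^sub>M (\<Pi>\<^sub>M i\<in>UNIV. (borel :: real measure)))"

definition Wof :: "traj \<Rightarrow> real" where "Wof \<omega> = fst \<omega>"
definition Aof :: "traj \<Rightarrow> nat \<Rightarrow> nat" where "Aof \<omega> = fst (snd \<omega>)"
definition Yof :: "traj \<Rightarrow> nat \<Rightarrow> real" where "Yof \<omega> = snd (snd \<omega>)"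

text \<open>Two outcomes carry the same data D_t = (W, A_1, Y_1, ..., A_t, Y_t).\<close>
definition prefix_eq :: "nat \<Rightarrow> traj \<Rightarrow> traj \<Rightarrow> bool" where
  "prefix_eq t \<omega> \<omega>' \<longleftrightarrow> Wof \<omega> = Wof \<omega>' \<and>
     (\<forall>i<t. Aof \<omega> i = Aof \<omega>' i \<and> Yof \<omega> i = Yof \<omega>' i)"

definition data_event :: "nat \<Rightarrow> traj set \<Rightarrow> bool" where
  "data_event t B \<longleftrightarrow> B \<in> sets trajM \<and>
     (\<forall>\<omega> \<omega>'. prefix_eq t \<omega> \<omega>' \<longrightarrow> (\<omega> \<in> B \<longleftrightarrow> \<omega>' \<in> B))"

definition Ncount :: "nat \<Rightarrow> nat \<Rightarrow> traj \<Rightarrow> nat" where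
  "Ncount k t \<omega> = card {i. i < t \<and> Aof \<omega> i = k}"

definition Ssum :: "nat \<Rightarrow> nat \<Rightarrow> traj \<Rightarrow> real" where
  "Ssum k t \<omega> = (\<Sum>i<t. if Aof \<omega> i = k then Yof \<omega> i else 0)"

definition sample_mean :: "nat \<Rightarrow> nat \<Rightarrow> traj \<Rightarrow> real" where
  "sample_mean k t \<omega> = Ssum k t \<omega> / real (Ncount k t \<omega>)"

definition arm_dist :: "real measure \<Rightarrow> bool" where
  "arm_dist P \<longleftrightarrow> prob_space P \<and> sets P = sets borel \<and> integrable P (\<lambda>x. x)"

definition mean :: "real measure \<Rightarrow> real" where
  "mean P = (\<integral>x. x \<partial>P)"

definition var_class :: "real \<Rightarrow> real measure \<Rightarrow> bool" where
  "var_class \<sigma> P \<longleftrightarrow> arm_dist P \<and> integrable P (\<lambda>x. x\<^sup>2) \<and>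
     (\<integral>x. (x - mean P)\<^sup>2 \<partial>P) = \<sigma>\<^sup>2"

text \<open>Nonadaptive sampling algorithm: nu t w a j is the conditional probability
of pulling arm j at time t+1 given W = w and past arms a 0, ..., a (t-1);
it does not depend on the observed arm values.\<close>
definition nonadaptive_alg :: "nat \<Rightarrow> (nat \<Rightarrow> real \<Rightarrow> (nat \<Rightarrow> nat) \<Rightarrow> nat \<Rightarrow> real) \<Rightarrow> bool" where
  "nonadaptive_alg K nu \<longleftrightarrow>
     (\<forall>t w a j. 0 \<le> nu t w a j) \<and>
     (\<forall>t w a j. j \<notin> {1..K} \<longrightarrow> nu t w a j = 0) \<and>
     (\<forall>t w a. (\<Sum>j\<in>{1..K}. nu t w a j) = 1) \<and>
     (\<forall>t w a a'. (\<forall>i<t. a i = a' i) \<longrightarrow> nu t w a = nu t w a') \<and>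
     (\<forall>t j. (\<lambda>\<omega>. nu t (Wof \<omega>) (Aof \<omega>) j) \<in> borel_measurable trajM)"

text \<open>Q is the distribution of (W, A, Y) induced by the arm distributions P and
the sampling algorithm nu (for some distribution of W): A_{t+1} is drawn from
nu given D_t, and Y_{t+1} is an independent draw from P_{A_{t+1}}.\<close>
definition bandit_law :: "nat \<Rightarrow> (nat \<Rightarrow> real measure) \<Rightarrow>
    (nat \<Rightarrow> real \<Rightarrow> (nat \<Rightarrow> nat) \<Rightarrow> nat \<Rightarrow> real) \<Rightarrow> traj measure \<Rightarrow> bool" where
  "bandit_law K P nu Q \<longleftrightarrow> prob_space Q \<and> sets Q = sets trajM \<and>
     (\<forall>t B j. data_event t B \<longrightarrow>
        emeasure Q (B \<inter> {\<omega>. Aof \<omega> t = j}) =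
          (\<integral>\<^sup>+\<omega>\<in>B. ennreal (nu t (Wof \<omega>) (Aof \<omega>) j) \<partial>Q)) \<and>
     (\<forall>t B j C. data_event t B \<longrightarrow> j \<in> {1..K} \<longrightarrow> C \<in> sets borel \<longrightarrow>
        emeasure Q (B \<inter> {\<omega>. Aof \<omega> t = j} \<inter> {\<omega>. Yof \<omega> t \<in> C}) =
          emeasure Q (B \<inter> {\<omega>. Aof \<omega> t = j}) * emeasure (P j) C)"

text \<open>Nonadaptive stopping rule: T \<omega> is the number of observations collected;
it is a stopping time for the data filtration and depends only on W and the arms.\<close>
definition nonadaptive_stop :: "(traj \<Rightarrow> nat) \<Rightarrow> bool" where
  "nonadaptive_stop T \<longleftrightarrow> T \<in> measurable trajM (count_space UNIV) \<and>
     (\<forall>t \<omega> \<omega>'. prefix_eq t \<omega> \<omega>' \<longrightarrow> (T \<omega> = t \<longleftrightarrow> T \<omega>' = t)) \<and>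
     (\<forall>\<omega> \<omega>'. Wof \<omega> = Wof \<omega>' \<and> Aof \<omega> = Aof \<omega>' \<longrightarrow> T \<omega> = T \<omega>')"

definition is_estimator :: "(nat \<Rightarrow> traj \<Rightarrow> real) \<Rightarrow> bool" where
  "is_estimator est \<longleftrightarrow> (\<forall>t. est t \<in> borel_measurable trajM) \<and>
     (\<forall>t \<omega> \<omega>'. prefix_eq t \<omega> \<omega>' \<longrightarrow> est t \<omega> = est t \<omega>')"

definition risk :: "nat \<Rightarrow> real \<Rightarrow> (nat \<Rightarrow> traj \<Rightarrow> real) \<Rightarrow> traj measure \<Rightarrow> (traj \<Rightarrow> nat) \<Rightarrow> ennreal" where
  "risk k \<mu> est Q T =
     (\<integral>\<^sup>+\<omega>. ennreal (real (Ncount k (T \<omega>) \<omega>) * (est (T \<omega>) \<omega> - \<mu>)\<^sup>2) \<partial>Q)"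

definition admissible :: "nat \<Rightarrow> nat \<Rightarrow> real \<Rightarrow> (nat \<Rightarrow> real measure) \<Rightarrow>
    (real measure \<times> (nat \<Rightarrow> real \<Rightarrow> (nat \<Rightarrow> nat) \<Rightarrow> nat \<Rightarrow> real) \<times> traj measure \<times> (traj \<Rightarrow> nat)) set" where
  "admissible K k \<sigma> P = {(Pk, nu, Q, T). var_class \<sigma> Pk \<and> nonadaptive_alg K nu \<and>
      bandit_law K (P(k := Pk)) nu Q \<and> nonadaptive_stop T \<and>
      (AE \<omega> in Q. 1 \<le> Ncount k (T \<omega>) \<omega>)}"

end

theory Submission
  imports Defs
begin

(*
  Write S_t for the sum of the centred values Y_i - mu over the first t steps at which arm k
  was pulled.  Then N_k(T) (mean_k(T) - mu)^2 = S_T^2 / N_k(T) = sum_t w_t S_t^2 with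
  w_t = 1{T = t} / N_k(t).  For nonadaptive sampling and stopping, w_t only depends on W and the
  first t arms, and for every such weight h with values in [0, 1] one has
  E[h S_t^2] = sigma^2 E[h N_k(t)], by induction on t: the arm pulled at time t can be averaged out
  against the data D_t, the new value is independent of D_t with variance sigma^2, and the cross
  term E[1{A_t = k} h S_t (Y_t - mu)] vanishes.  Summing over t shows that the sample mean has
  risk exactly sigma^2 on every instance.

  For the lower bound, pull arm k once and let it take the values c +- sigma with probability 1/2.
  The problems with centres c = 2 m sigma overlap in one support point each, so whatever an
  estimator answers there costs it about sigma^2 in one of the two neighbouring problems; summing
  the risks along the chain m = 1, ..., n + 1 gives at least n sigma^2.
*)

lemma nn_integral_indicator_Int:
  "A \<in> sets M \<Longrightarrow> B \<in> sets M \<Longrightarrow> (\<integral>\<^sup>+x. indicator A x * indicator B x \<partial>M) = emeasure M (A \<inter> B)"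
  by (simp add: indicator_inter_arith[symmetric])

lemma nn_integral_ennreal_cmult:
  "0 \<le> c \<Longrightarrow> f \<in> borel_measurable M \<Longrightarrow>
    (\<integral>\<^sup>+x. ennreal (c * f x) \<partial>M) = ennreal c * (\<integral>\<^sup>+x. ennreal (f x) \<partial>M)"
  by (simp add: ennreal_mult' nn_integral_cmult)

lemma nn_integral_eq_if_emeasure_eq_on_subalgebra:
  assumes "subalgebra M F" "subalgebra N F"
    and "\<And>A. A \<in> sets F \<Longrightarrow> emeasure M A = emeasure N A"
    and "f \<in> borel_measurable F"
  shows "(\<integral>\<^sup>+x. f x \<partial>M) = (\<integral>\<^sup>+x. f x \<partial>N)"
proof -
  have "restr_to_subalg M F = restr_to_subalg N F"
    using assms by (intro measure_eqI) (simp_all add: sets_restr_to_subalg emeasure_restr_to_subalg)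
  then show ?thesis
    using assms by (metis nn_integral_subalgebra2)
qed

lemma nn_integral_add_cancel_right:
  fixes f g f' g' :: "'a \<Rightarrow> real"
  assumes [measurable]: "f \<in> borel_measurable M" "g \<in> borel_measurable M"
    "f' \<in> borel_measurable M" "g' \<in> borel_measurable M"
    and nonneg: "\<And>x. 0 \<le> f x" "\<And>x. 0 \<le> g x" "\<And>x. 0 \<le> f' x" "\<And>x. 0 \<le> g' x"
    and eq: "\<And>x. f x + g x = f' x + g' x"
    and g_eq: "(\<integral>\<^sup>+x. g x \<partial>M) = (\<integral>\<^sup>+x. g' x \<partial>M)" and g_fin: "(\<integral>\<^sup>+x. g x \<partial>M) \<noteq> \<infinity>"
  shows "(\<integral>\<^sup>+x. f x \<partial>M) = (\<integral>\<^sup>+x. f' x \<partial>M)"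
proof -
  have "(\<integral>\<^sup>+x. g x \<partial>M) + (\<integral>\<^sup>+x. f x \<partial>M) = (\<integral>\<^sup>+x. ennreal (f x + g x) \<partial>M)"
    using nonneg by (simp add: nn_integral_add[symmetric] add.commute)
  also have "\<dots> = (\<integral>\<^sup>+x. g x \<partial>M) + (\<integral>\<^sup>+x. f' x \<partial>M)"
    using nonneg by (simp add: eq nn_integral_add g_eq add.commute)
  finally show ?thesis
    using g_fin by (simp add: ennreal_add_left_cancel)
qed

lemma pos_neg_parts_mult_le: "max x 0 * max y 0 + max (- x) 0 * max (- y) 0 \<le> x\<^sup>2 + (y::real)\<^sup>2"
proof -
  have "max x 0 * max y 0 + max (- x) 0 * max (- y) 0 \<le> \<bar>x\<bar> * \<bar>y\<bar>"
    by (cases "0 \<le> x"; cases "0 \<le> y") (simp_all add: max_def mult_le_0_iff)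
  also have "\<dots> \<le> 2 * (\<bar>x\<bar> * \<bar>y\<bar>)"
    by simp
  also have "\<dots> \<le> x\<^sup>2 + y\<^sup>2"
    using sum_squares_bound[of "\<bar>x\<bar>" "\<bar>y\<bar>"] by (simp add: mult.assoc)
  finally show ?thesis .
qed

lemma square_add_eq_pos_neg_parts:
  fixes a h g s y :: real
  assumes "a = 0 \<or> a = 1" and "a * h = a * g"
  shows "h * (s + a * y)\<^sup>2 + 2 * (a * g * (max s 0 * max (- y) 0 + max (- s) 0 * max y 0)) =
    (h * s\<^sup>2 + a * g * y\<^sup>2) + 2 * (a * g * (max s 0 * max y 0 + max (- s) 0 * max (- y) 0))"
  using assms by (cases "0 \<le> s"; cases "0 \<le> y") (auto simp: max_def power2_eq_square algebra_simps)

lemma (in sequence_space) comb_seq_vimage_prefix_event: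
  assumes B: "B \<in> sets S"
    and prefix: "\<And>y y'. \<forall>i<t. y i = y' i \<Longrightarrow> y \<in> B \<Longrightarrow> y' \<in> space S \<Longrightarrow> y' \<in> B"
  shows "(\<lambda>(y, y'). comb_seq t y y') -` (B \<inter> {y. y t \<in> C}) \<inter> space (S \<Otimes>\<^sub>M S) =
    B \<times> {y' \<in> space S. y' 0 \<in> C}"
proof (intro set_eqI iffI)
  fix x assume x: "x \<in> (\<lambda>(y, y'). comb_seq t y y') -` (B \<inter> {y. y t \<in> C}) \<inter> space (S \<Otimes>\<^sub>M S)"
  obtain y y' where xe: "x = (y, y')" by (cases x)
  have sp: "y \<in> space S" "y' \<in> space S"
    using x xe by (auto simp: space_pair_measure)
  have "comb_seq t y y' \<in> B" "\<forall>i<t. comb_seq t y y' i = y i"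
    using x xe by (auto simp: comb_seq_less)
  then have "y \<in> B"
    using prefix sp by blast
  moreover have "y' 0 \<in> C"
    using x xe by (auto simp: comb_seq_def)
  ultimately show "x \<in> B \<times> {y' \<in> space S. y' 0 \<in> C}"
    using xe sp by auto
next
  fix x assume x: "x \<in> B \<times> {y' \<in> space S. y' 0 \<in> C}"
  obtain y y' where xe: "x = (y, y')" by (cases x)
  have sp: "y \<in> space S" "y' \<in> space S"
    using x xe sets.sets_into_space[OF B] by auto
  have "comb_seq t y y' \<in> space S"
    using sp by (auto simp: space_PiM comb_seq_def PiE_def Pi_def extensional_def)
  moreover have "\<forall>i<t. y i = comb_seq t y y' i"
    by (simp add: comb_seq_less)
  ultimately have "comb_seq t y y' \<in> B"
    using prefix x xe by blast
  moreover have "comb_seq t y y' t \<in> C"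
    using x xe by (auto simp: comb_seq_def)
  ultimately show "x \<in> (\<lambda>(y, y'). comb_seq t y y') -` (B \<inter> {y. y t \<in> C}) \<inter> space (S \<Otimes>\<^sub>M S)"
    using xe sp by (auto simp: space_pair_measure)
qed

lemma emeasure_PiM_prefix_Int_component:
  fixes M :: "'a measure"
  assumes M: "prob_space M" and B: "B \<in> sets (PiM UNIV (\<lambda>_::nat. M))"
    and prefix: "\<And>y y'. \<forall>i<t. y i = y' i \<Longrightarrow> y \<in> B \<Longrightarrow> y' \<in> space (PiM UNIV (\<lambda>_::nat. M)) \<Longrightarrow> y' \<in> B"
    and C: "C \<in> sets M"
  shows "emeasure (PiM UNIV (\<lambda>_::nat. M)) (B \<inter> {y. y t \<in> C}) = emeasure (PiM UNIV (\<lambda>_::nat. M)) B * emeasure M C"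
proof -
  interpret M: prob_space M by (rule M)
  interpret sequence_space M by unfold_locales
  have "B \<inter> {y. y t \<in> C} = B \<inter> ((\<lambda>y. y t) -` C \<inter> space S)"
    using sets.sets_into_space[OF B] by auto
  then have BC: "B \<inter> {y. y t \<in> C} \<in> sets S"
    using B C by (simp add: sets.Int measurable_sets[OF measurable_component_singleton])
  have C0: "{y' \<in> space S. y' 0 \<in> C} \<in> sets S"
    using measurable_sets[OF measurable_component_singleton[of 0 UNIV "\<lambda>_. M"] C]
    by (simp add: vimage_def Int_def conj_commute)
  (* cutting the sequence at t turns coordinate t into coordinate 0 of an independent copy *)
  have "emeasure S (B \<inter> {y. y t \<in> C}) = emeasure (distr (S \<Otimes>\<^sub>M S) S (\<lambda>(y, y'). comb_seq t y y')) (B \<inter> {y. y t \<in> C})"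
    by (subst (1) PiM_comb_seq[symmetric, of t]) (simp add: case_prod_beta)
  also have "\<dots> = emeasure (S \<Otimes>\<^sub>M S) ((\<lambda>(y, y'). comb_seq t y y') -` (B \<inter> {y. y t \<in> C}) \<inter> space (S \<Otimes>\<^sub>M S))"
    by (rule emeasure_distr[OF _ BC]) (simp add: case_prod_beta measurable_comb_seq)
  also have "\<dots> = emeasure (S \<Otimes>\<^sub>M S) (B \<times> {y' \<in> space S. y' 0 \<in> C})"
    by (simp only: comb_seq_vimage_prefix_event[OF B prefix])
  also have "\<dots> = emeasure S B * emeasure M C"
    using B C0 C by (simp add: P.emeasure_pair_measure_Times emeasure_PiM_Collect_single)
  finally show ?thesis .
qed

section \<open>The data of a bandit run\<close>

lemma measurable_Aof [measurable]: "(\<lambda>\<omega>. Aof \<omega> t) \<in> measurable trajM (count_space UNIV)"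
  unfolding trajM_def Aof_def by measurable

lemma measurable_Yof [measurable]: "(\<lambda>\<omega>. Yof \<omega> t) \<in> borel_measurable trajM"
  unfolding trajM_def Yof_def by measurable

lemma space_trajM [simp]: "space trajM = UNIV"
  unfolding trajM_def by (simp add: space_pair_measure space_PiM)

abbreviation pulled :: "nat \<Rightarrow> nat \<Rightarrow> traj set" where
  "pulled t j \<equiv> {\<omega>. Aof \<omega> t = j}"

lemma sets_pulled [measurable]: "pulled t j \<in> sets trajM"
  using measurable_sets[OF measurable_Aof, of "{j}" t] by (simp add: vimage_def)

definition determined_by_data :: "nat \<Rightarrow> (traj \<Rightarrow> 'b) \<Rightarrow> bool" where
  "determined_by_data t f \<longleftrightarrow> (\<forall>\<omega> \<omega>'. prefix_eq t \<omega> \<omega>' \<longrightarrow> f \<omega> = f \<omega>')"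

lemma determined_by_data_const [simp]: "determined_by_data t (\<lambda>_. c)"
  by (simp add: determined_by_data_def)

lemma determined_by_data_comp: "determined_by_data t f \<Longrightarrow> determined_by_data t (\<lambda>\<omega>. F (f \<omega>))"
  by (simp add: determined_by_data_def)

lemma determined_by_data_comp2:
  "determined_by_data t f \<Longrightarrow> determined_by_data t g \<Longrightarrow> determined_by_data t (\<lambda>\<omega>. F (f \<omega>) (g \<omega>))"
  by (simp add: determined_by_data_def)

definition data_algebra :: "nat \<Rightarrow> traj measure" where
  "data_algebra t = sigma UNIV {B. data_event t B}"

lemma sigma_algebra_data_events: "sigma_algebra UNIV {B. data_event t B}"
  unfolding sigma_algebra_iff2
proof (intro conjI ballI allI impI)
  fix B assume "B \<in> {B. data_event t B}"
  then show "UNIV - B \<in> {B. data_event t B}"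
    unfolding data_event_def using sets.compl_sets[of B trajM] by auto
next
  fix A :: "nat \<Rightarrow> traj set" assume "range A \<subseteq> {B. data_event t B}"
  then have "\<And>i. data_event t (A i)" by auto
  then show "(\<Union>i. A i) \<in> {B. data_event t B}"
    unfolding data_event_def by auto
qed (auto simp: data_event_def)

lemma sets_data_algebra: "sets (data_algebra t) = {B. data_event t B}"
  unfolding data_algebra_def
  using sigma_algebra.sets_measure_of_eq[OF sigma_algebra_data_events] by simp

lemma space_data_algebra [simp]: "space (data_algebra t) = UNIV"
  by (simp add: data_algebra_def)

lemma subalgebra_data_algebra:
  "sets M = sets trajM \<Longrightarrow> subalgebra M (data_algebra t)"
  unfolding subalgebra_def sets_data_algebra data_event_def
  by (auto dest: sets_eq_imp_space_eq)

lemma measurable_data_algebraI: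
  "f \<in> measurable trajM N \<Longrightarrow> determined_by_data t f \<Longrightarrow> f \<in> measurable (data_algebra t) N"
  unfolding measurable_def sets_data_algebra data_event_def determined_by_data_def
  by auto

lemma nn_integral_mult_eq_if_eq_on_data_events:
  assumes M: "sets M = sets trajM"
    and [measurable]: "f \<in> borel_measurable trajM" "g \<in> borel_measurable trajM"
    and events: "\<And>B. data_event t B \<Longrightarrow>
      (\<integral>\<^sup>+\<omega>. f \<omega> * indicator B \<omega> \<partial>M) = (\<integral>\<^sup>+\<omega>. g \<omega> * indicator B \<omega> \<partial>M)"
    and u: "u \<in> borel_measurable trajM" "determined_by_data t u"
  shows "(\<integral>\<^sup>+\<omega>. f \<omega> * u \<omega> \<partial>M) = (\<integral>\<^sup>+\<omega>. g \<omega> * u \<omega> \<partial>M)"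
proof -
  have [measurable_cong]: "sets M = sets trajM" by (rule M)
  have "(\<integral>\<^sup>+\<omega>. u \<omega> \<partial>density M f) = (\<integral>\<^sup>+\<omega>. u \<omega> \<partial>density M g)"
  proof (rule nn_integral_eq_if_emeasure_eq_on_subalgebra)
    show "subalgebra (density M f) (data_algebra t)" "subalgebra (density M g) (data_algebra t)"
      using M by (simp_all add: subalgebra_data_algebra)
    show "u \<in> borel_measurable (data_algebra t)"
      using u by (rule measurable_data_algebraI)
    fix B assume "B \<in> sets (data_algebra t)"
    then have "data_event t B" by (simp add: sets_data_algebra)
    moreover from this have "B \<in> sets M" using M by (simp add: data_event_def)
    ultimately show "emeasure (density M f) B = emeasure (density M g) B"
      using events by (simp add: emeasure_density)
  qed
  then show ?thesis
    using u by (simp add: nn_integral_density)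
qed

lemma Ncount_Suc: "Ncount k (Suc t) \<omega> = Ncount k t \<omega> + (if Aof \<omega> t = k then 1 else 0)"
proof -
  have "{i. i < Suc t \<and> Aof \<omega> i = k} = {i. i < t \<and> Aof \<omega> i = k} \<union> (if Aof \<omega> t = k then {t} else {})"
    by (auto simp: less_Suc_eq)
  then show ?thesis unfolding Ncount_def by (simp add: card_insert_if)
qed

lemma Ncount_0 [simp]: "Ncount k 0 \<omega> = 0"
  by (simp add: Ncount_def)

lemma Ncount_Suc_0: "Ncount k (Suc 0) \<omega> = (if Aof \<omega> 0 = k then 1 else 0)"
  using Ncount_Suc[of k 0 \<omega>] by simp

lemma Ncount_le: "Ncount k t \<omega> \<le> t"
  by (induction t) (auto simp: Ncount_Suc)

lemma Ncount_cong: "(\<And>i. i < t \<Longrightarrow> Aof \<omega> i = Aof \<omega>' i) \<Longrightarrow> Ncount k t \<omega> = Ncount k t \<omega>'"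
  unfolding Ncount_def by (intro arg_cong[where f=card]) auto

lemma determined_by_data_Ncount: "determined_by_data t (\<lambda>\<omega>. real (Ncount k t \<omega>))"
  unfolding determined_by_data_def prefix_eq_def by (auto intro: Ncount_cong)

lemma measurable_Ncount [measurable]: "(\<lambda>\<omega>. real (Ncount k t \<omega>)) \<in> borel_measurable trajM"
proof -
  have "real (Ncount k t \<omega>) = (\<Sum>i<t. if Aof \<omega> i = k then 1 else 0)" for \<omega>
    by (induction t) (auto simp: Ncount_Suc)
  then show ?thesis by simp
qed

definition centred_sum :: "nat \<Rightarrow> real \<Rightarrow> nat \<Rightarrow> traj \<Rightarrow> real" where
  "centred_sum k \<mu> t \<omega> = (\<Sum>i<t. if Aof \<omega> i = k then Yof \<omega> i - \<mu> else 0)"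

lemma centred_sum_0 [simp]: "centred_sum k \<mu> 0 \<omega> = 0"
  by (simp add: centred_sum_def)

lemma centred_sum_Suc:
  "centred_sum k \<mu> (Suc t) \<omega> = centred_sum k \<mu> t \<omega> + indicator (pulled t k) \<omega> * (Yof \<omega> t - \<mu>)"
  by (simp add: centred_sum_def split: split_indicator)

lemma centred_sum_eq: "centred_sum k \<mu> t \<omega> = Ssum k t \<omega> - real (Ncount k t \<omega>) * \<mu>"
  by (induction t) (auto simp: centred_sum_def Ssum_def Ncount_Suc algebra_simps)

lemma measurable_centred_sum [measurable]: "centred_sum k \<mu> t \<in> borel_measurable trajM"
  unfolding centred_sum_def[abs_def] by measurable

lemma determined_by_data_centred_sum: "determined_by_data t (centred_sum k \<mu> t)"
  unfolding determined_by_data_def centred_sum_def prefix_eq_def by (auto intro: sum.cong)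

lemma Ncount_mult_sample_mean_sq:
  "real (Ncount k t \<omega>) * (sample_mean k t \<omega> - \<mu>)\<^sup>2 = (centred_sum k \<mu> t \<omega>)\<^sup>2 / real (Ncount k t \<omega>)"
  unfolding centred_sum_eq sample_mean_def
  by (cases "Ncount k t \<omega> = 0") (simp_all add: field_simps power2_eq_square)

lemma is_estimator_sample_mean: "is_estimator (sample_mean k)"
  unfolding is_estimator_def
proof (intro conjI allI impI)
  show "sample_mean k t \<in> borel_measurable trajM" for t
    unfolding sample_mean_def[abs_def] Ssum_def[abs_def] by measurable
  show "sample_mean k t \<omega> = sample_mean k t \<omega>'" if "prefix_eq t \<omega> \<omega>'" for t \<omega> \<omega>'
    using that Ncount_cong[of t \<omega> \<omega>' k] unfolding sample_mean_def Ssum_def prefix_eq_def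
    by (auto intro: sum.cong)
qed

definition with_arm :: "nat \<Rightarrow> nat \<Rightarrow> traj \<Rightarrow> traj" where
  "with_arm t j \<omega> = (Wof \<omega>, (Aof \<omega>)(t := j), Yof \<omega>)"

lemma Wof_with_arm [simp]: "Wof (with_arm t j \<omega>) = Wof \<omega>"
  and Aof_with_arm [simp]: "Aof (with_arm t j \<omega>) = (Aof \<omega>)(t := j)"
  and Yof_with_arm [simp]: "Yof (with_arm t j \<omega>) = Yof \<omega>"
  by (simp_all add: with_arm_def Wof_def Aof_def Yof_def)

lemma with_arm_Aof [simp]: "with_arm t (Aof \<omega> t) \<omega> = \<omega>"
  by (cases \<omega>) (simp add: with_arm_def Wof_def Aof_def Yof_def)

lemma measurable_with_arm [measurable]: "with_arm t j \<in> measurable trajM trajM"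
  unfolding with_arm_def trajM_def Wof_def Aof_def Yof_def
  by (intro measurable_Pair measurable_PiM_single') (auto simp: space_PiM)

section \<open>Bandit laws and weights depending only on the arms\<close>

definition arm_history_weight :: "nat \<Rightarrow> (traj \<Rightarrow> real) \<Rightarrow> bool" where
  "arm_history_weight t h \<longleftrightarrow> h \<in> borel_measurable trajM \<and> (\<forall>\<omega>. 0 \<le> h \<omega> \<and> h \<omega> \<le> 1) \<and>
     (\<forall>\<omega> \<omega>'. Wof \<omega> = Wof \<omega>' \<and> (\<forall>i<t. Aof \<omega> i = Aof \<omega>' i) \<longrightarrow> h \<omega> = h \<omega>')"

lemma arm_history_weightI:
  assumes "h \<in> borel_measurable trajM" "\<And>\<omega>. 0 \<le> h \<omega>" "\<And>\<omega>. h \<omega> \<le> 1"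
    and "\<And>\<omega> \<omega>'. Wof \<omega> = Wof \<omega>' \<Longrightarrow> \<forall>i<t. Aof \<omega> i = Aof \<omega>' i \<Longrightarrow> h \<omega> = h \<omega>'"
  shows "arm_history_weight t h"
  unfolding arm_history_weight_def
proof (intro conjI allI impI)
  fix \<omega> \<omega>' :: traj assume "Wof \<omega> = Wof \<omega>' \<and> (\<forall>i<t. Aof \<omega> i = Aof \<omega>' i)"
  then show "h \<omega> = h \<omega>'" using assms(4) by blast
qed (use assms(1-3) in simp_all)

lemma arm_history_weightD:
  assumes "arm_history_weight t h"
  shows "h \<in> borel_measurable trajM" "0 \<le> h \<omega>" "h \<omega> \<le> 1"
    and "Wof \<omega> = Wof \<omega>' \<Longrightarrow> \<forall>i<t. Aof \<omega> i = Aof \<omega>' i \<Longrightarrow> h \<omega> = h \<omega>'"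
  using assms unfolding arm_history_weight_def by (elim conjE; blast)+

lemma determined_by_data_arm_history_weight: "arm_history_weight t h \<Longrightarrow> determined_by_data t h"
  unfolding determined_by_data_def prefix_eq_def by (metis arm_history_weightD(4))

lemma arm_history_weight_const: "0 \<le> c \<Longrightarrow> c \<le> 1 \<Longrightarrow> arm_history_weight t (\<lambda>_. c)"
  by (rule arm_history_weightI) simp_all

lemma arm_history_weight_with_arm:
  assumes h: "arm_history_weight (Suc t) h"
  shows "arm_history_weight t (\<lambda>\<omega>. h (with_arm t j \<omega>))"
proof (rule arm_history_weightI)
  note [measurable] = arm_history_weightD(1)[OF h]
  show "(\<lambda>\<omega>. h (with_arm t j \<omega>)) \<in> borel_measurable trajM"
    by measurable
  show "0 \<le> h (with_arm t j \<omega>)" "h (with_arm t j \<omega>) \<le> 1" for \<omega>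
    using arm_history_weightD(2,3)[OF h] by auto
  show "h (with_arm t j \<omega>) = h (with_arm t j \<omega>')"
    if "Wof \<omega> = Wof \<omega>'" "\<forall>i<t. Aof \<omega> i = Aof \<omega>' i" for \<omega> \<omega>'
    using that by (intro arm_history_weightD(4)[OF h]) (simp_all add: less_Suc_eq)
qed

lemma arm_history_weight_stopping:
  assumes T: "nonadaptive_stop T"
  shows "arm_history_weight t (\<lambda>\<omega>. indicator {\<omega>. T \<omega> = t} \<omega> / real (Ncount k t \<omega>))"
proof (rule arm_history_weightI)
  have [measurable]: "T \<in> measurable trajM (count_space UNIV)"
    using T by (simp add: nonadaptive_stop_def)
  show "(\<lambda>\<omega>. indicator {\<omega>. T \<omega> = t} \<omega> / real (Ncount k t \<omega>)) \<in> borel_measurable trajM"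
    by measurable
  show "0 \<le> indicator {\<omega>. T \<omega> = t} \<omega> / real (Ncount k t \<omega>)" for \<omega>
    by simp
  show "indicator {\<omega>. T \<omega> = t} \<omega> / real (Ncount k t \<omega>) \<le> 1" for \<omega>
    by (cases "Ncount k t \<omega> = 0") (simp_all split: split_indicator)
  show "indicator {\<omega>. T \<omega> = t} \<omega> / real (Ncount k t \<omega>) =
      indicator {\<omega>. T \<omega> = t} \<omega>' / real (Ncount k t \<omega>')"
    if "Wof \<omega> = Wof \<omega>'" "\<forall>i<t. Aof \<omega> i = Aof \<omega>' i" for \<omega> \<omega>'
  proof -
    have T_data: "\<And>t \<omega> \<omega>'. prefix_eq t \<omega> \<omega>' \<Longrightarrow> T \<omega> = t \<longleftrightarrow> T \<omega>' = t"
      and T_arms: "\<And>\<omega> \<omega>'. Wof \<omega> = Wof \<omega>' \<Longrightarrow> Aof \<omega> = Aof \<omega>' \<Longrightarrow> T \<omega> = T \<omega>'"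
      using T unfolding nonadaptive_stop_def by blast+
    define \<omega>'' where "\<omega>'' = (Wof \<omega>, Aof \<omega>', Yof \<omega>)"
    have "prefix_eq t \<omega> \<omega>''"
      using that by (simp add: prefix_eq_def \<omega>''_def Wof_def Aof_def Yof_def)
    then have "T \<omega> = t \<longleftrightarrow> T \<omega>'' = t"
      by (rule T_data)
    also have "T \<omega>'' = T \<omega>'"
      using that(1) by (intro T_arms) (simp_all add: \<omega>''_def Wof_def Aof_def Yof_def)
    finally show ?thesis
      using Ncount_cong[of t \<omega> \<omega>' k] that(2) by (simp split: split_indicator)
  qed
qed

locale bandit =
  fixes K :: nat and P :: "nat \<Rightarrow> real measure"
    and nu :: "nat \<Rightarrow> real \<Rightarrow> (nat \<Rightarrow> nat) \<Rightarrow> nat \<Rightarrow> real" and Q :: "traj measure"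
  assumes law: "bandit_law K P nu Q" and alg: "nonadaptive_alg K nu"
begin

lemma sets_Q [measurable_cong]: "sets Q = sets trajM"
  using law by (simp add: bandit_law_def)

sublocale Q: prob_space Q
  using law by (simp add: bandit_law_def)

lemma measurable_nu [measurable]: "(\<lambda>\<omega>. nu t (Wof \<omega>) (Aof \<omega>) j) \<in> borel_measurable trajM"
  using alg by (simp add: nonadaptive_alg_def)

lemma nu_nonneg: "0 \<le> nu t w a j"
  using alg by (simp add: nonadaptive_alg_def)

lemma sum_nu: "(\<Sum>j\<in>{1..K}. nu t w a j) = 1"
  using alg by (simp add: nonadaptive_alg_def)

lemma nu_cong: "(\<And>i. i < t \<Longrightarrow> a i = a' i) \<Longrightarrow> nu t w a = nu t w a'"
  using alg unfolding nonadaptive_alg_def by blast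

lemma nn_integral_pulled:
  fixes u :: "traj \<Rightarrow> ennreal"
  assumes "u \<in> borel_measurable trajM" "determined_by_data t u"
  shows "(\<integral>\<^sup>+\<omega>. indicator (pulled t j) \<omega> * u \<omega> \<partial>Q) = (\<integral>\<^sup>+\<omega>. nu t (Wof \<omega>) (Aof \<omega>) j * u \<omega> \<partial>Q)"
proof (rule nn_integral_mult_eq_if_eq_on_data_events[where t=t])
  fix B assume B: "data_event t B"
  then have [measurable]: "B \<in> sets trajM" by (simp add: data_event_def)
  have "(\<integral>\<^sup>+\<omega>. indicator (pulled t j) \<omega> * indicator B \<omega> \<partial>Q) = emeasure Q (B \<inter> pulled t j)"
    by (simp add: nn_integral_indicator_Int Int_commute)
  also have "\<dots> = (\<integral>\<^sup>+\<omega>. ennreal (nu t (Wof \<omega>) (Aof \<omega>) j) * indicator B \<omega> \<partial>Q)"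
    using law B by (simp add: bandit_law_def)
  finally show "(\<integral>\<^sup>+\<omega>. indicator (pulled t j) \<omega> * indicator B \<omega> \<partial>Q) =
      (\<integral>\<^sup>+\<omega>. ennreal (nu t (Wof \<omega>) (Aof \<omega>) j) * indicator B \<omega> \<partial>Q)" .
qed (use assms sets_Q in simp_all)

lemma distr_pulled_reward:
  assumes B: "data_event t B" and j: "j \<in> {1..K}" and sets_P: "sets (P j) = sets borel"
  shows "distr (density Q (indicator (B \<inter> pulled t j))) borel (\<lambda>\<omega>. Yof \<omega> t) =
    scale_measure (emeasure Q (B \<inter> pulled t j)) (P j)"
proof (rule measure_eqI)
  have [measurable]: "B \<in> sets trajM"
    using B by (simp add: data_event_def)
  fix C assume "C \<in> sets (distr (density Q (indicator (B \<inter> pulled t j))) borel (\<lambda>\<omega>. Yof \<omega> t))"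
  then have [measurable]: "C \<in> sets borel"
    by simp
  have [measurable]: "{\<omega>. Yof \<omega> t \<in> C} \<in> sets trajM"
    using measurable_sets[OF measurable_Yof, of C t] by (simp add: vimage_def)
  have "emeasure (distr (density Q (indicator (B \<inter> pulled t j))) borel (\<lambda>\<omega>. Yof \<omega> t)) C =
      (\<integral>\<^sup>+\<omega>. indicator (B \<inter> pulled t j) \<omega> * indicator {\<omega>. Yof \<omega> t \<in> C} \<omega> \<partial>Q)"
    by (simp add: emeasure_distr vimage_def, subst emeasure_density) (simp_all add: sets_Q)
  also have "\<dots> = emeasure Q (B \<inter> pulled t j \<inter> {\<omega>. Yof \<omega> t \<in> C})"
    by (simp add: nn_integral_indicator_Int)
  also have "\<dots> = emeasure Q (B \<inter> pulled t j) * emeasure (P j) C"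
    using law B j by (simp add: bandit_law_def)
  finally show "emeasure (distr (density Q (indicator (B \<inter> pulled t j))) borel (\<lambda>\<omega>. Yof \<omega> t)) C =
      emeasure (scale_measure (emeasure Q (B \<inter> pulled t j)) (P j)) C"
    by simp
qed (simp add: sets_P)

lemma nn_integral_pulled_reward:
  fixes u :: "traj \<Rightarrow> ennreal"
  assumes j: "j \<in> {1..K}" and sets_P: "sets (P j) = sets borel"
    and u: "u \<in> borel_measurable trajM" "determined_by_data t u"
    and [measurable]: "g \<in> borel_measurable borel"
  shows "(\<integral>\<^sup>+\<omega>. indicator (pulled t j) \<omega> * g (Yof \<omega> t) * u \<omega> \<partial>Q) =
    (\<integral>\<^sup>+\<omega>. indicator (pulled t j) \<omega> * u \<omega> \<partial>Q) * (\<integral>\<^sup>+y. g y \<partial>P j)"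
proof -
  note [measurable] = u(1)
  define c where "c = (\<integral>\<^sup>+y. g y \<partial>P j)"
  have "(\<integral>\<^sup>+\<omega>. indicator (pulled t j) \<omega> * g (Yof \<omega> t) * u \<omega> \<partial>Q) =
      (\<integral>\<^sup>+\<omega>. indicator (pulled t j) \<omega> * c * u \<omega> \<partial>Q)"
  proof (rule nn_integral_mult_eq_if_eq_on_data_events[where t=t])
    fix B assume B: "data_event t B"
    then have [measurable]: "B \<in> sets trajM" by (simp add: data_event_def)
    have "(\<integral>\<^sup>+\<omega>. indicator (pulled t j) \<omega> * g (Yof \<omega> t) * indicator B \<omega> \<partial>Q) =
        (\<integral>\<^sup>+y. g y \<partial>distr (density Q (indicator (B \<inter> pulled t j))) borel (\<lambda>\<omega>. Yof \<omega> t))"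
      by (simp add: nn_integral_distr nn_integral_density)
        (auto intro!: nn_integral_cong split: split_indicator)
    also have "\<dots> = emeasure Q (B \<inter> pulled t j) * c"
      unfolding distr_pulled_reward[OF B j sets_P] c_def
      by (simp add: nn_integral_scale_measure measurable_cong_sets[OF sets_P])
    also have "\<dots> = (\<integral>\<^sup>+\<omega>. indicator (pulled t j) \<omega> * c * indicator B \<omega> \<partial>Q)"
      by (simp add: nn_integral_cmult nn_integral_indicator_Int mult_ac Int_commute)
    finally show "(\<integral>\<^sup>+\<omega>. indicator (pulled t j) \<omega> * g (Yof \<omega> t) * indicator B \<omega> \<partial>Q) =
        (\<integral>\<^sup>+\<omega>. indicator (pulled t j) \<omega> * c * indicator B \<omega> \<partial>Q)" .
  qed (use u sets_Q in simp_all)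
  also have "\<dots> = (\<integral>\<^sup>+\<omega>. indicator (pulled t j) \<omega> * u \<omega> \<partial>Q) * c"
    by (simp add: nn_integral_cmult mult_ac)
  finally show ?thesis unfolding c_def .
qed

lemma AE_pulled_arm_in_range: "AE \<omega> in Q. Aof \<omega> t \<in> {1..K}"
proof -
  define R where "R = {\<omega>. Aof \<omega> t \<in> {1..K}}"
  have "R \<in> sets Q"
    using measurable_sets[OF measurable_Aof, of "{1..K}" t] by (simp add: R_def vimage_def sets_Q)
  then have "emeasure Q R = (\<integral>\<^sup>+\<omega>. indicator R \<omega> \<partial>Q)"
    by simp
  also have "\<dots> = (\<integral>\<^sup>+\<omega>. (\<Sum>j\<in>{1..K}. indicator (pulled t j) \<omega>) \<partial>Q)"
    by (auto intro!: nn_integral_cong simp: indicator_def R_def)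
  also have "\<dots> = (\<Sum>j\<in>{1..K}. \<integral>\<^sup>+\<omega>. indicator (pulled t j) \<omega> * 1 \<partial>Q)"
    by (simp add: nn_integral_sum)
  also have "\<dots> = (\<Sum>j\<in>{1..K}. \<integral>\<^sup>+\<omega>. ennreal (nu t (Wof \<omega>) (Aof \<omega>) j) * 1 \<partial>Q)"
    by (intro sum.cong refl nn_integral_pulled) simp_all
  also have "\<dots> = (\<integral>\<^sup>+\<omega>. (\<Sum>j\<in>{1..K}. ennreal (nu t (Wof \<omega>) (Aof \<omega>) j) * 1) \<partial>Q)"
    by (rule nn_integral_sum[symmetric]) measurable
  also have "\<dots> = (\<integral>\<^sup>+\<omega>. ennreal (\<Sum>j\<in>{1..K}. nu t (Wof \<omega>) (Aof \<omega>) j) \<partial>Q)"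
    by (intro nn_integral_cong) (simp add: sum_ennreal nu_nonneg)
  also have "\<dots> = 1"
    unfolding sum_nu using Q.emeasure_space_1 by simp
  finally have "AE \<omega> in Q. \<omega> \<in> R"
    by (intro Q.AE_prob_1) (simp add: Q.emeasure_eq_measure)
  then show ?thesis
    by (simp add: R_def)
qed

definition next_arm_average :: "nat \<Rightarrow> (traj \<Rightarrow> real) \<Rightarrow> traj \<Rightarrow> real" where
  "next_arm_average t h \<omega> = (\<Sum>j\<in>{1..K}. nu t (Wof \<omega>) (Aof \<omega>) j * h (with_arm t j \<omega>))"

lemma arm_history_weight_next_arm_average:
  assumes h: "arm_history_weight (Suc t) h"
  shows "arm_history_weight t (next_arm_average t h)"
proof (rule arm_history_weightI)
  note hj = arm_history_weightD[OF arm_history_weight_with_arm[OF h]]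
  note [measurable] = arm_history_weightD(1)[OF h]
  show "next_arm_average t h \<in> borel_measurable trajM"
    unfolding next_arm_average_def[abs_def] by measurable
  show "0 \<le> next_arm_average t h \<omega>" for \<omega>
    unfolding next_arm_average_def using hj(2) nu_nonneg by (intro sum_nonneg mult_nonneg_nonneg)
  show "next_arm_average t h \<omega> \<le> 1" for \<omega>
  proof -
    have "next_arm_average t h \<omega> \<le> (\<Sum>j\<in>{1..K}. nu t (Wof \<omega>) (Aof \<omega>) j)"
      unfolding next_arm_average_def using hj(3) nu_nonneg by (intro sum_mono mult_left_le)
    then show ?thesis
      by (simp only: sum_nu)
  qed
  show "next_arm_average t h \<omega> = next_arm_average t h \<omega>'"
    if "Wof \<omega> = Wof \<omega>'" "\<forall>i<t. Aof \<omega> i = Aof \<omega>' i" for \<omega> \<omega>'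
  proof -
    have "h (with_arm t j \<omega>) = h (with_arm t j \<omega>')" for j
      using hj(4)[OF that] .
    then show ?thesis
      using that nu_cong[of t "Aof \<omega>" "Aof \<omega>'" "Wof \<omega>'"] unfolding next_arm_average_def by simp
  qed
qed

lemma nn_integral_next_arm_average:
  assumes h: "arm_history_weight (Suc t) h"
    and [measurable]: "f \<in> borel_measurable trajM" and f: "\<And>\<omega>. 0 \<le> f \<omega>" "determined_by_data t f"
  shows "(\<integral>\<^sup>+\<omega>. ennreal (h \<omega> * f \<omega>) \<partial>Q) = (\<integral>\<^sup>+\<omega>. ennreal (next_arm_average t h \<omega> * f \<omega>) \<partial>Q)"
proof -
  note hj = arm_history_weightD[OF arm_history_weight_with_arm[OF h]]
  note [measurable] = arm_history_weightD(1)[OF h]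
  have "(\<integral>\<^sup>+\<omega>. ennreal (h \<omega> * f \<omega>) \<partial>Q) =
      (\<integral>\<^sup>+\<omega>. (\<Sum>j\<in>{1..K}. indicator (pulled t j) \<omega> * ennreal (h (with_arm t j \<omega>) * f \<omega>)) \<partial>Q)"
    using AE_pulled_arm_in_range[of t]
    by (intro nn_integral_cong_AE, eventually_elim)
      (simp add: indicator_def sum.If_cases Int_absorb1 subset_eq)
  also have "\<dots> = (\<Sum>j\<in>{1..K}. \<integral>\<^sup>+\<omega>. indicator (pulled t j) \<omega> * ennreal (h (with_arm t j \<omega>) * f \<omega>) \<partial>Q)"
    by (rule nn_integral_sum) measurable
  also have "\<dots> = (\<Sum>j\<in>{1..K}. \<integral>\<^sup>+\<omega>. ennreal (nu t (Wof \<omega>) (Aof \<omega>) j) * ennreal (h (with_arm t j \<omega>) * f \<omega>) \<partial>Q)"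
    using determined_by_data_comp2[OF determined_by_data_arm_history_weight[OF arm_history_weight_with_arm[OF h]] f(2)]
    by (intro sum.cong refl nn_integral_pulled) simp_all
  also have "\<dots> = (\<integral>\<^sup>+\<omega>. (\<Sum>j\<in>{1..K}. ennreal (nu t (Wof \<omega>) (Aof \<omega>) j) * ennreal (h (with_arm t j \<omega>) * f \<omega>)) \<partial>Q)"
    by (rule nn_integral_sum[symmetric]) measurable
  also have "\<dots> = (\<integral>\<^sup>+\<omega>. ennreal (next_arm_average t h \<omega> * f \<omega>) \<partial>Q)"
  proof (rule nn_integral_cong)
    fix \<omega>
    show "(\<Sum>j\<in>{1..K}. ennreal (nu t (Wof \<omega>) (Aof \<omega>) j) * ennreal (h (with_arm t j \<omega>) * f \<omega>)) =
        ennreal (next_arm_average t h \<omega> * f \<omega>)"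
    proof -
      have "(\<Sum>j\<in>{1..K}. ennreal (nu t (Wof \<omega>) (Aof \<omega>) j) * ennreal (h (with_arm t j \<omega>) * f \<omega>)) =
          (\<Sum>j\<in>{1..K}. ennreal (nu t (Wof \<omega>) (Aof \<omega>) j * h (with_arm t j \<omega>) * f \<omega>))"
        using nu_nonneg by (intro sum.cong refl) (simp add: ennreal_mult' mult.assoc)
      also have "\<dots> = ennreal (\<Sum>j\<in>{1..K}. nu t (Wof \<omega>) (Aof \<omega>) j * h (with_arm t j \<omega>) * f \<omega>)"
        using hj(2) f(1) nu_nonneg by (intro sum_ennreal) simp
      finally show ?thesis
        unfolding next_arm_average_def sum_distrib_right .
    qed
  qed
  finally show ?thesis .
qed

end

section \<open>Risk of the sample mean\<close>

locale bandit_arm = bandit +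
  fixes k :: nat and \<sigma> :: real
  assumes arm: "k \<in> {1..K}" and var_class_arm: "var_class \<sigma> (P k)"
begin

abbreviation \<mu> :: real where "\<mu> \<equiv> mean (P k)"

lemma sets_P_arm [measurable_cong]: "sets (P k) = sets borel"
  using var_class_arm by (simp add: var_class_def arm_dist_def)

sublocale P: prob_space "P k"
  using var_class_arm by (simp add: var_class_def arm_dist_def)

lemma integrable_P_arm: "integrable (P k) (\<lambda>y. y)" "integrable (P k) (\<lambda>y. y\<^sup>2)"
  using var_class_arm by (simp_all add: var_class_def arm_dist_def)

lemma nn_integral_centred_square: "(\<integral>\<^sup>+y. ennreal ((y - \<mu>)\<^sup>2) \<partial>P k) = ennreal (\<sigma>\<^sup>2)"
proof -
  have "integrable (P k) (\<lambda>y. y\<^sup>2 - 2 * \<mu> * y + \<mu>\<^sup>2)"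
    using integrable_P_arm by (intro Bochner_Integration.integrable_add Bochner_Integration.integrable_diff
        integrable_mult_right P.integrable_const)
  then have "integrable (P k) (\<lambda>y. (y - \<mu>)\<^sup>2)"
    by (simp add: power2_diff algebra_simps)
  then show ?thesis
    using var_class_arm by (simp add: nn_integral_eq_integral var_class_def)
qed

lemma nn_integral_pos_part_eq_neg_part:
  "(\<integral>\<^sup>+y. ennreal (y - \<mu>) \<partial>P k) = (\<integral>\<^sup>+y. ennreal (\<mu> - y) \<partial>P k)"
proof -
  have int: "integrable (P k) (\<lambda>y. max (y - \<mu>) 0)" "integrable (P k) (\<lambda>y. max (\<mu> - y) 0)"
    using integrable_P_arm
    by (auto intro!: integrable_max Bochner_Integration.integrable_diff P.integrable_const)
  have "(\<integral>y. max (y - \<mu>) 0 \<partial>P k) - (\<integral>y. max (\<mu> - y) 0 \<partial>P k) =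
      (\<integral>y. max (y - \<mu>) 0 - max (\<mu> - y) 0 \<partial>P k)"
    using int by (rule Bochner_Integration.integral_diff[symmetric])
  also have "\<dots> = (\<integral>y. y - \<mu> \<partial>P k)"
    by (intro Bochner_Integration.integral_cong) (auto simp: max_def)
  also have "\<dots> = 0"
    using integrable_P_arm by (simp add: mean_def P.prob_space)
  finally have "(\<integral>y. max (y - \<mu>) 0 \<partial>P k) = (\<integral>y. max (\<mu> - y) 0 \<partial>P k)"
    by simp
  then have "(\<integral>\<^sup>+y. ennreal (max (y - \<mu>) 0) \<partial>P k) = (\<integral>\<^sup>+y. ennreal (max (\<mu> - y) 0) \<partial>P k)"
    using int by (subst (1 2) nn_integral_eq_integral) auto
  then show ?thesis
    by simp
qed

lemma nn_integral_pulled_arm_reward: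
  fixes u :: "traj \<Rightarrow> real" and g :: "real \<Rightarrow> real"
  assumes [measurable]: "u \<in> borel_measurable trajM" "g \<in> borel_measurable borel"
    and u: "\<And>\<omega>. 0 \<le> u \<omega>" "determined_by_data t u" and g: "\<And>y. 0 \<le> g y"
  shows "(\<integral>\<^sup>+\<omega>. ennreal (indicator (pulled t k) \<omega> * u \<omega> * g (Yof \<omega> t)) \<partial>Q) =
    (\<integral>\<^sup>+\<omega>. ennreal (indicator (pulled t k) \<omega> * u \<omega>) \<partial>Q) * (\<integral>\<^sup>+y. ennreal (g y) \<partial>P k)"
proof -
  have "(\<integral>\<^sup>+\<omega>. ennreal (indicator (pulled t k) \<omega> * u \<omega> * g (Yof \<omega> t)) \<partial>Q) =
      (\<integral>\<^sup>+\<omega>. indicator (pulled t k) \<omega> * ennreal (g (Yof \<omega> t)) * ennreal (u \<omega>) \<partial>Q)"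
  proof (rule nn_integral_cong)
    fix \<omega>
    show "ennreal (indicator (pulled t k) \<omega> * u \<omega> * g (Yof \<omega> t)) =
        indicator (pulled t k) \<omega> * ennreal (g (Yof \<omega> t)) * ennreal (u \<omega>)"
      using u(1) g by (cases "\<omega> \<in> pulled t k") (simp_all add: ennreal_mult mult.commute)
  qed
  also have "\<dots> = (\<integral>\<^sup>+\<omega>. indicator (pulled t k) \<omega> * ennreal (u \<omega>) \<partial>Q) * (\<integral>\<^sup>+y. ennreal (g y) \<partial>P k)"
  proof (rule nn_integral_pulled_reward[OF arm sets_P_arm, where u="\<lambda>\<omega>. ennreal (u \<omega>)" and g="\<lambda>y. ennreal (g y)"])
    show "(\<lambda>\<omega>. ennreal (u \<omega>)) \<in> borel_measurable trajM" "(\<lambda>y. ennreal (g y)) \<in> borel_measurable borel"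
      by measurable
    show "determined_by_data t (\<lambda>\<omega>. ennreal (u \<omega>))"
      using u(2) by (rule determined_by_data_comp)
  qed
  also have "(\<integral>\<^sup>+\<omega>. indicator (pulled t k) \<omega> * ennreal (u \<omega>) \<partial>Q) = (\<integral>\<^sup>+\<omega>. ennreal (indicator (pulled t k) \<omega> * u \<omega>) \<partial>Q)"
    by (intro nn_integral_cong) (simp split: split_indicator)
  finally show ?thesis .
qed

lemma nn_integral_pulled_centred_square:
  assumes u: "u \<in> borel_measurable trajM" "\<And>\<omega>. 0 \<le> u \<omega>" "determined_by_data t u"
  shows "(\<integral>\<^sup>+\<omega>. ennreal (indicator (pulled t k) \<omega> * u \<omega> * (Yof \<omega> t - \<mu>)\<^sup>2) \<partial>Q) =
    (\<integral>\<^sup>+\<omega>. ennreal (indicator (pulled t k) \<omega> * u \<omega>) \<partial>Q) * ennreal (\<sigma>\<^sup>2)"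
proof -
  have "(\<lambda>y. (y - \<mu>)\<^sup>2) \<in> borel_measurable borel"
    by measurable
  from nn_integral_pulled_arm_reward[OF u(1) this u(2,3)] show ?thesis
    by (simp add: nn_integral_centred_square)
qed

lemma nn_integral_pulled_pos_part_eq_neg_part:
  assumes u: "u \<in> borel_measurable trajM" "\<And>\<omega>. 0 \<le> u \<omega>" "determined_by_data t u"
  shows "(\<integral>\<^sup>+\<omega>. ennreal (indicator (pulled t k) \<omega> * u \<omega> * max (Yof \<omega> t - \<mu>) 0) \<partial>Q) =
    (\<integral>\<^sup>+\<omega>. ennreal (indicator (pulled t k) \<omega> * u \<omega> * max (\<mu> - Yof \<omega> t) 0) \<partial>Q)"
proof -
  have pos: "(\<lambda>y. max (y - \<mu>) 0) \<in> borel_measurable borel" and neg: "(\<lambda>y. max (\<mu> - y) 0) \<in> borel_measurable borel"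
    by simp_all
  have "(\<integral>\<^sup>+\<omega>. ennreal (indicator (pulled t k) \<omega> * u \<omega> * max (Yof \<omega> t - \<mu>) 0) \<partial>Q) =
      (\<integral>\<^sup>+\<omega>. ennreal (indicator (pulled t k) \<omega> * u \<omega>) \<partial>Q) * (\<integral>\<^sup>+y. ennreal (max (y - \<mu>) 0) \<partial>P k)"
    using nn_integral_pulled_arm_reward[OF u(1) pos u(2,3)] by simp
  also have "\<dots> = (\<integral>\<^sup>+\<omega>. ennreal (indicator (pulled t k) \<omega> * u \<omega> * max (\<mu> - Yof \<omega> t) 0) \<partial>Q)"
    using nn_integral_pulled_arm_reward[OF u(1) neg u(2,3)] by (simp add: nn_integral_pos_part_eq_neg_part)
  finally show ?thesis .
qed

text \<open>The cross term \<open>E[1{A\<^sub>t = k} u S (Y\<^sub>t - \<mu>)]\<close> vanishes; both sides are split into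
  positive and negative parts so that no integrability is needed.\<close>
lemma nn_integral_pulled_cross_term:
  assumes [measurable]: "u \<in> borel_measurable trajM" "S \<in> borel_measurable trajM"
    and u: "\<And>\<omega>. 0 \<le> u \<omega>" "determined_by_data t u" and S: "determined_by_data t S"
  shows "(\<integral>\<^sup>+\<omega>. ennreal (indicator (pulled t k) \<omega> * u \<omega> *
      (max (S \<omega>) 0 * max (Yof \<omega> t - \<mu>) 0 + max (- S \<omega>) 0 * max (\<mu> - Yof \<omega> t) 0)) \<partial>Q) =
    (\<integral>\<^sup>+\<omega>. ennreal (indicator (pulled t k) \<omega> * u \<omega> *
      (max (S \<omega>) 0 * max (\<mu> - Yof \<omega> t) 0 + max (- S \<omega>) 0 * max (Yof \<omega> t - \<mu>) 0)) \<partial>Q)"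
proof -
  let ?A = "indicator (pulled t k) :: traj \<Rightarrow> real"
  define p where "p \<omega> = u \<omega> * max (S \<omega>) 0" for \<omega>
  define m where "m \<omega> = u \<omega> * max (- S \<omega>) 0" for \<omega>
  have [measurable]: "p \<in> borel_measurable trajM" "m \<in> borel_measurable trajM"
    unfolding p_def[abs_def] m_def[abs_def]
    by (intro borel_measurable_times borel_measurable_max borel_measurable_uminus borel_measurable_const; fact)+
  have pm: "\<And>\<omega>. 0 \<le> p \<omega>" "\<And>\<omega>. 0 \<le> m \<omega>"
    using u(1) by (simp_all add: p_def m_def)
  have pm_det: "determined_by_data t p" "determined_by_data t m"
    using determined_by_data_comp2[OF u(2) S, of "\<lambda>x y. x * max y 0"]
      determined_by_data_comp2[OF u(2) S, of "\<lambda>x y. x * max (- y) 0"]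
    by (simp_all add: p_def[abs_def] m_def[abs_def])
  have split: "(\<integral>\<^sup>+\<omega>. ennreal (?A \<omega> * u \<omega> * (max (S \<omega>) 0 * a \<omega> + max (- S \<omega>) 0 * b \<omega>)) \<partial>Q) =
      (\<integral>\<^sup>+\<omega>. ennreal (?A \<omega> * p \<omega> * a \<omega>) \<partial>Q) + (\<integral>\<^sup>+\<omega>. ennreal (?A \<omega> * m \<omega> * b \<omega>) \<partial>Q)"
    if [measurable]: "a \<in> borel_measurable trajM" "b \<in> borel_measurable trajM"
      and ab: "\<And>\<omega>. 0 \<le> a \<omega>" "\<And>\<omega>. 0 \<le> b \<omega>" for a b
  proof -
    have "?A \<omega> * u \<omega> * (max (S \<omega>) 0 * a \<omega> + max (- S \<omega>) 0 * b \<omega>) = ?A \<omega> * p \<omega> * a \<omega> + ?A \<omega> * m \<omega> * b \<omega>"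
      for \<omega> by (simp add: p_def m_def algebra_simps)
    then have "(\<integral>\<^sup>+\<omega>. ennreal (?A \<omega> * u \<omega> * (max (S \<omega>) 0 * a \<omega> + max (- S \<omega>) 0 * b \<omega>)) \<partial>Q) =
        (\<integral>\<^sup>+\<omega>. ennreal (?A \<omega> * p \<omega> * a \<omega>) + ennreal (?A \<omega> * m \<omega> * b \<omega>) \<partial>Q)"
      using ab pm(1,2) by (simp add: ennreal_plus)
    also have "\<dots> = (\<integral>\<^sup>+\<omega>. ennreal (?A \<omega> * p \<omega> * a \<omega>) \<partial>Q) + (\<integral>\<^sup>+\<omega>. ennreal (?A \<omega> * m \<omega> * b \<omega>) \<partial>Q)"
      by (rule nn_integral_add; measurable)
    finally show ?thesis .
  qed
  have "(\<integral>\<^sup>+\<omega>. ennreal (?A \<omega> * u \<omega> *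
      (max (S \<omega>) 0 * max (Yof \<omega> t - \<mu>) 0 + max (- S \<omega>) 0 * max (\<mu> - Yof \<omega> t) 0)) \<partial>Q) =
    (\<integral>\<^sup>+\<omega>. ennreal (?A \<omega> * p \<omega> * max (Yof \<omega> t - \<mu>) 0) \<partial>Q) +
    (\<integral>\<^sup>+\<omega>. ennreal (?A \<omega> * m \<omega> * max (\<mu> - Yof \<omega> t) 0) \<partial>Q)"
    by (rule split; (measurable | simp))
  also have "\<dots> = (\<integral>\<^sup>+\<omega>. ennreal (?A \<omega> * p \<omega> * max (\<mu> - Yof \<omega> t) 0) \<partial>Q) +
    (\<integral>\<^sup>+\<omega>. ennreal (?A \<omega> * m \<omega> * max (Yof \<omega> t - \<mu>) 0) \<partial>Q)"
    using nn_integral_pulled_pos_part_eq_neg_part[OF _ pm(1) pm_det(1)]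
      nn_integral_pulled_pos_part_eq_neg_part[OF _ pm(2) pm_det(2)]
    by simp
  also have "\<dots> = (\<integral>\<^sup>+\<omega>. ennreal (?A \<omega> * u \<omega> *
      (max (S \<omega>) 0 * max (\<mu> - Yof \<omega> t) 0 + max (- S \<omega>) 0 * max (Yof \<omega> t - \<mu>) 0)) \<partial>Q)"
    by (rule split[symmetric]; (measurable | simp))
  finally show ?thesis .
qed

lemma nn_integral_pulled_cross_term_finite:
  assumes [measurable]: "u \<in> borel_measurable trajM" "S \<in> borel_measurable trajM"
    and u: "\<And>\<omega>. 0 \<le> u \<omega>" "\<And>\<omega>. u \<omega> \<le> 1"
    and S: "(\<integral>\<^sup>+\<omega>. ennreal ((S \<omega>)\<^sup>2) \<partial>Q) \<noteq> \<infinity>"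
  shows "(\<integral>\<^sup>+\<omega>. ennreal (indicator (pulled t k) \<omega> * u \<omega> *
      (max (S \<omega>) 0 * max (Yof \<omega> t - \<mu>) 0 + max (- S \<omega>) 0 * max (\<mu> - Yof \<omega> t) 0)) \<partial>Q) \<noteq> \<infinity>"
proof -
  let ?A = "indicator (pulled t k) :: traj \<Rightarrow> real"
  have "?A \<omega> * u \<omega> * (max (S \<omega>) 0 * max (Yof \<omega> t - \<mu>) 0 + max (- S \<omega>) 0 * max (\<mu> - Yof \<omega> t) 0)
      \<le> (S \<omega>)\<^sup>2 + ?A \<omega> * 1 * (Yof \<omega> t - \<mu>)\<^sup>2" for \<omega>
  proof -
    have "max (S \<omega>) 0 * max (Yof \<omega> t - \<mu>) 0 + max (- S \<omega>) 0 * max (\<mu> - Yof \<omega> t) 0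
        \<le> (S \<omega>)\<^sup>2 + (Yof \<omega> t - \<mu>)\<^sup>2"
      using pos_neg_parts_mult_le[of "S \<omega>" "Yof \<omega> t - \<mu>"] by simp
    moreover have "0 \<le> max (S \<omega>) 0 * max (Yof \<omega> t - \<mu>) 0 + max (- S \<omega>) 0 * max (\<mu> - Yof \<omega> t) 0"
      by simp
    ultimately show ?thesis
      using u[of \<omega>] by (cases "\<omega> \<in> pulled t k") (auto intro: order_trans[OF mult_left_le_one_le])
  qed
  then have "(\<integral>\<^sup>+\<omega>. ennreal (?A \<omega> * u \<omega> *
      (max (S \<omega>) 0 * max (Yof \<omega> t - \<mu>) 0 + max (- S \<omega>) 0 * max (\<mu> - Yof \<omega> t) 0)) \<partial>Q)
      \<le> (\<integral>\<^sup>+\<omega>. ennreal ((S \<omega>)\<^sup>2) + ennreal (?A \<omega> * 1 * (Yof \<omega> t - \<mu>)\<^sup>2) \<partial>Q)"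
    by (intro nn_integral_mono) (simp add: ennreal_plus[symmetric] del: ennreal_plus)
  also have "\<dots> = (\<integral>\<^sup>+\<omega>. ennreal ((S \<omega>)\<^sup>2) \<partial>Q) + (\<integral>\<^sup>+\<omega>. ennreal (?A \<omega> * 1 * (Yof \<omega> t - \<mu>)\<^sup>2) \<partial>Q)"
    by (rule nn_integral_add; measurable)
  also have "\<dots> = (\<integral>\<^sup>+\<omega>. ennreal ((S \<omega>)\<^sup>2) \<partial>Q) + (\<integral>\<^sup>+\<omega>. ennreal (?A \<omega> * 1) \<partial>Q) * ennreal (\<sigma>\<^sup>2)"
    by (subst nn_integral_pulled_centred_square) simp_all
  also have "\<dots> < \<infinity>"
  proof -
    have "pulled t k \<in> sets Q"
      by (simp add: sets_Q)
    then have "(\<integral>\<^sup>+\<omega>. ennreal (?A \<omega> * 1) \<partial>Q) \<noteq> \<infinity>"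
      using Q.emeasure_finite[of "pulled t k"] by (simp add: ennreal_indicator)
    then show ?thesis
      using S by (simp add: ennreal_mult_eq_top_iff less_top[symmetric])
  qed
  finally show ?thesis
    by (simp add: less_top)
qed

lemma nn_integral_weighted_square_Suc:
  assumes h: "arm_history_weight (Suc t) h"
    and fin: "(\<integral>\<^sup>+\<omega>. ennreal ((centred_sum k \<mu> t \<omega>)\<^sup>2) \<partial>Q) \<noteq> \<infinity>"
  shows "(\<integral>\<^sup>+\<omega>. ennreal (h \<omega> * (centred_sum k \<mu> (Suc t) \<omega>)\<^sup>2) \<partial>Q) =
    (\<integral>\<^sup>+\<omega>. ennreal (h \<omega> * (centred_sum k \<mu> t \<omega>)\<^sup>2) \<partial>Q) +
    (\<integral>\<^sup>+\<omega>. ennreal (indicator (pulled t k) \<omega> * h \<omega>) \<partial>Q) * ennreal (\<sigma>\<^sup>2)"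
proof -
  let ?A = "indicator (pulled t k) :: traj \<Rightarrow> real"
  define S where "S = centred_sum k \<mu> t"
  define g where "g \<omega> = h (with_arm t k \<omega>)" for \<omega>
  have g: "arm_history_weight t g"
    unfolding g_def[abs_def] by (rule arm_history_weight_with_arm[OF h])
  note gD = arm_history_weightD[OF g] and hD = arm_history_weightD[OF h]
  have [measurable]: "S \<in> borel_measurable trajM" "g \<in> borel_measurable trajM" "h \<in> borel_measurable trajM"
    using gD(1) hD(1) by (simp_all add: S_def)
  have g_det: "determined_by_data t g" and S_det: "determined_by_data t S"
    using g by (simp_all add: determined_by_data_arm_history_weight S_def determined_by_data_centred_sum)
  have h_eq_g: "?A \<omega> * h \<omega> = ?A \<omega> * g \<omega>" for \<omega>
    using with_arm_Aof[of t \<omega>] by (cases "Aof \<omega> t = k") (simp_all add: g_def)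
  (* h S'^2 = h S^2 + 1{A_t = k} g a^2 + 2 * 1{A_t = k} g S a with a = Y_t - mu, the cross term being
     split into positive and negative parts so that the identity holds without subtraction *)
  define F1 where "F1 \<omega> = ?A \<omega> * g \<omega> *
      (max (S \<omega>) 0 * max (Yof \<omega> t - \<mu>) 0 + max (- S \<omega>) 0 * max (\<mu> - Yof \<omega> t) 0)" for \<omega>
  define F2 where "F2 \<omega> = ?A \<omega> * g \<omega> *
      (max (S \<omega>) 0 * max (\<mu> - Yof \<omega> t) 0 + max (- S \<omega>) 0 * max (Yof \<omega> t - \<mu>) 0)" for \<omega>
  have [measurable]: "F1 \<in> borel_measurable trajM" "F2 \<in> borel_measurable trajM"
    unfolding F1_def[abs_def] F2_def[abs_def] by measurable
  have F_nonneg: "0 \<le> F1 \<omega>" "0 \<le> F2 \<omega>" for \<omega>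
    using gD(2) by (simp_all add: F1_def F2_def)
  have pointwise: "h \<omega> * (centred_sum k \<mu> (Suc t) \<omega>)\<^sup>2 + 2 * F2 \<omega> =
      (h \<omega> * (S \<omega>)\<^sup>2 + ?A \<omega> * g \<omega> * (Yof \<omega> t - \<mu>)\<^sup>2) + 2 * F1 \<omega>" for \<omega>
    using square_add_eq_pos_neg_parts[of "?A \<omega>" "h \<omega>" "g \<omega>" "S \<omega>" "Yof \<omega> t - \<mu>"] h_eq_g[of \<omega>]
    by (simp add: F1_def F2_def S_def centred_sum_Suc indicator_def)
  have F_eq: "(\<integral>\<^sup>+\<omega>. ennreal (F1 \<omega>) \<partial>Q) = (\<integral>\<^sup>+\<omega>. ennreal (F2 \<omega>) \<partial>Q)"
    unfolding F1_def F2_def by (rule nn_integral_pulled_cross_term[OF gD(1) _ gD(2) g_det S_det]) simp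
  have F_fin: "(\<integral>\<^sup>+\<omega>. ennreal (F1 \<omega>) \<partial>Q) \<noteq> \<infinity>"
    unfolding F1_def by (rule nn_integral_pulled_cross_term_finite[OF gD(1) _ gD(2,3) fin[folded S_def]]) simp
  have cross: "(\<integral>\<^sup>+\<omega>. ennreal (2 * F2 \<omega>) \<partial>Q) = (\<integral>\<^sup>+\<omega>. ennreal (2 * F1 \<omega>) \<partial>Q)"
    and cross_fin: "(\<integral>\<^sup>+\<omega>. ennreal (2 * F2 \<omega>) \<partial>Q) \<noteq> \<infinity>"
    using F_eq F_fin by (simp_all add: nn_integral_ennreal_cmult ennreal_mult_eq_top_iff)
  have "(\<integral>\<^sup>+\<omega>. ennreal (h \<omega> * (centred_sum k \<mu> (Suc t) \<omega>)\<^sup>2) \<partial>Q) =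
      (\<integral>\<^sup>+\<omega>. ennreal (h \<omega> * (S \<omega>)\<^sup>2 + ?A \<omega> * g \<omega> * (Yof \<omega> t - \<mu>)\<^sup>2) \<partial>Q)"
    by (rule nn_integral_add_cancel_right[OF _ _ _ _ _ _ _ _ pointwise cross cross_fin])
      (use gD(2) hD(2) F_nonneg in simp_all)
  also have "\<dots> = (\<integral>\<^sup>+\<omega>. ennreal (h \<omega> * (S \<omega>)\<^sup>2) \<partial>Q) + (\<integral>\<^sup>+\<omega>. ennreal (?A \<omega> * g \<omega> * (Yof \<omega> t - \<mu>)\<^sup>2) \<partial>Q)"
    using gD(2) hD(2) by (subst nn_integral_add[symmetric]) (simp_all add: ennreal_plus)
  also have "(\<integral>\<^sup>+\<omega>. ennreal (?A \<omega> * g \<omega> * (Yof \<omega> t - \<mu>)\<^sup>2) \<partial>Q) = (\<integral>\<^sup>+\<omega>. ennreal (?A \<omega> * h \<omega>) \<partial>Q) * ennreal (\<sigma>\<^sup>2)"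
    using nn_integral_pulled_centred_square[OF gD(1) gD(2) g_det] by (simp add: h_eq_g)
  finally show ?thesis
    by (simp add: S_def)
qed

lemma nn_integral_weighted_centred_square:
  "arm_history_weight t h \<Longrightarrow> (\<integral>\<^sup>+\<omega>. ennreal (h \<omega> * (centred_sum k \<mu> t \<omega>)\<^sup>2) \<partial>Q) =
    ennreal (\<sigma>\<^sup>2) * (\<integral>\<^sup>+\<omega>. ennreal (h \<omega> * real (Ncount k t \<omega>)) \<partial>Q)"
proof (induction t arbitrary: h)
  case (Suc t)
  note hD = arm_history_weightD[OF Suc.prems]
  note [measurable] = hD(1)
  have fin: "(\<integral>\<^sup>+\<omega>. ennreal ((centred_sum k \<mu> t \<omega>)\<^sup>2) \<partial>Q) \<noteq> \<infinity>"
  proof -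
    have "(\<integral>\<^sup>+\<omega>. ennreal ((centred_sum k \<mu> t \<omega>)\<^sup>2) \<partial>Q) =
        ennreal (\<sigma>\<^sup>2) * (\<integral>\<^sup>+\<omega>. ennreal (real (Ncount k t \<omega>)) \<partial>Q)"
      using Suc.IH[OF arm_history_weight_const[of 1]] by simp
    also have "\<dots> \<le> ennreal (\<sigma>\<^sup>2) * (\<integral>\<^sup>+\<omega>. ennreal (real t) \<partial>Q)"
      by (intro mult_left_mono nn_integral_mono) (simp_all add: Ncount_le)
    also have "\<dots> < \<infinity>"
      using Q.emeasure_space_1 by (simp add: ennreal_mult_less_top)
    finally show ?thesis
      by simp
  qed
  have "(\<integral>\<^sup>+\<omega>. ennreal (h \<omega> * (centred_sum k \<mu> t \<omega>)\<^sup>2) \<partial>Q) =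
      (\<integral>\<^sup>+\<omega>. ennreal (next_arm_average t h \<omega> * (centred_sum k \<mu> t \<omega>)\<^sup>2) \<partial>Q)"
    by (rule nn_integral_next_arm_average[OF Suc.prems])
      (auto intro: determined_by_data_comp[OF determined_by_data_centred_sum])
  also have "\<dots> = ennreal (\<sigma>\<^sup>2) * (\<integral>\<^sup>+\<omega>. ennreal (next_arm_average t h \<omega> * real (Ncount k t \<omega>)) \<partial>Q)"
    by (rule Suc.IH[OF arm_history_weight_next_arm_average[OF Suc.prems]])
  also have "(\<integral>\<^sup>+\<omega>. ennreal (next_arm_average t h \<omega> * real (Ncount k t \<omega>)) \<partial>Q) =
      (\<integral>\<^sup>+\<omega>. ennreal (h \<omega> * real (Ncount k t \<omega>)) \<partial>Q)"
    by (rule nn_integral_next_arm_average[OF Suc.prems, symmetric]) (simp_all add: determined_by_data_Ncount)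
  finally have square: "(\<integral>\<^sup>+\<omega>. ennreal (h \<omega> * (centred_sum k \<mu> t \<omega>)\<^sup>2) \<partial>Q) =
      ennreal (\<sigma>\<^sup>2) * (\<integral>\<^sup>+\<omega>. ennreal (h \<omega> * real (Ncount k t \<omega>)) \<partial>Q)" .
  have "(\<integral>\<^sup>+\<omega>. ennreal (h \<omega> * real (Ncount k (Suc t) \<omega>)) \<partial>Q) =
      (\<integral>\<^sup>+\<omega>. ennreal (h \<omega> * real (Ncount k t \<omega>)) + ennreal (indicator (pulled t k) \<omega> * h \<omega>) \<partial>Q)"
    using hD(2) by (intro nn_integral_cong) (simp add: Ncount_Suc distrib_left ennreal_plus[symmetric]
        del: ennreal_plus split: split_indicator)
  also have "\<dots> = (\<integral>\<^sup>+\<omega>. ennreal (h \<omega> * real (Ncount k t \<omega>)) \<partial>Q) +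
      (\<integral>\<^sup>+\<omega>. ennreal (indicator (pulled t k) \<omega> * h \<omega>) \<partial>Q)"
    by (rule nn_integral_add; measurable)
  finally show ?case
    using nn_integral_weighted_square_Suc[OF Suc.prems fin] square
    by (simp add: distrib_left mult.commute)
qed simp

lemma risk_sample_mean:
  assumes T: "nonadaptive_stop T" and pulled_once: "AE \<omega> in Q. 1 \<le> Ncount k (T \<omega>) \<omega>"
  shows "risk k \<mu> (sample_mean k) Q T = ennreal (\<sigma>\<^sup>2)"
proof -
  define w where "w t \<omega> = indicator {\<omega>. T \<omega> = t} \<omega> / real (Ncount k t \<omega>)" for t \<omega>
  have w: "arm_history_weight t (w t)" for t
    unfolding w_def[abs_def] using T by (rule arm_history_weight_stopping)
  note [measurable] = arm_history_weightD(1)[OF w]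
  have only_T: "(\<Sum>t. ennreal (w t \<omega> * f t)) = ennreal (f (T \<omega>) / real (Ncount k (T \<omega>) \<omega>))" for \<omega> f
    by (subst suminf_finite[of "{T \<omega>}"]) (auto simp: w_def)
  have "risk k \<mu> (sample_mean k) Q T = (\<integral>\<^sup>+\<omega>. (\<Sum>t. ennreal (w t \<omega> * (centred_sum k \<mu> t \<omega>)\<^sup>2)) \<partial>Q)"
    by (simp add: risk_def only_T Ncount_mult_sample_mean_sq)
  also have "\<dots> = (\<Sum>t. \<integral>\<^sup>+\<omega>. ennreal (w t \<omega> * (centred_sum k \<mu> t \<omega>)\<^sup>2) \<partial>Q)"
    by (rule nn_integral_suminf) measurable
  also have "\<dots> = ennreal (\<sigma>\<^sup>2) * (\<Sum>t. \<integral>\<^sup>+\<omega>. ennreal (w t \<omega> * real (Ncount k t \<omega>)) \<partial>Q)"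
    by (simp add: nn_integral_weighted_centred_square[OF w] ennreal_suminf_cmult)
  also have "(\<Sum>t. \<integral>\<^sup>+\<omega>. ennreal (w t \<omega> * real (Ncount k t \<omega>)) \<partial>Q) =
      (\<integral>\<^sup>+\<omega>. (\<Sum>t. ennreal (w t \<omega> * real (Ncount k t \<omega>))) \<partial>Q)"
    by (rule nn_integral_suminf[symmetric]) measurable
  also have "\<dots> = (\<integral>\<^sup>+\<omega>. 1 \<partial>Q)"
    using pulled_once by (intro nn_integral_cong_AE) (auto simp: only_T)
  finally show ?thesis
    using Q.emeasure_space_1 by simp
qed

end

section \<open>A two-point lower bound\<close>

definition two_point :: "real \<Rightarrow> real \<Rightarrow> real measure" where
  "two_point \<sigma> c = distr (measure_pmf (bernoulli_pmf (1/2))) borel (\<lambda>b. if b then c + \<sigma> else c - \<sigma>)"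

lemma sets_two_point [measurable_cong]: "sets (two_point \<sigma> c) = sets borel"
  by (simp add: two_point_def)

lemma prob_space_two_point: "prob_space (two_point \<sigma> c)"
  unfolding two_point_def by (rule measure_pmf.prob_space_distr) simp

lemma integrable_two_point: "f \<in> borel_measurable borel \<Longrightarrow> integrable (two_point \<sigma> c) (f :: real \<Rightarrow> real)"
  unfolding two_point_def by (subst integrable_distr_eq) (auto intro: integrable_measure_pmf_finite)

lemma integral_two_point:
  "f \<in> borel_measurable borel \<Longrightarrow> (\<integral>x. f x \<partial>two_point \<sigma> c) = f (c + \<sigma>) / 2 + f (c - \<sigma>) / 2"
  for f :: "real \<Rightarrow> real"
  unfolding two_point_def by (subst integral_distr) auto

lemma nn_integral_two_point:
  "f \<in> borel_measurable borel \<Longrightarrow> (\<integral>\<^sup>+x. f x \<partial>two_point \<sigma> c) = f (c + \<sigma>) * ennreal (1/2) + f (c - \<sigma>) * ennreal (1/2)"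
  unfolding two_point_def by (subst nn_integral_distr) auto

lemma mean_two_point: "mean (two_point \<sigma> c) = c"
  unfolding mean_def by (subst integral_two_point) (auto simp: field_simps)

lemma var_class_two_point: "var_class \<sigma> (two_point \<sigma> c)"
  unfolding var_class_def arm_dist_def
  by (auto simp: prob_space_two_point sets_two_point integrable_two_point mean_two_point integral_two_point)

definition iid_two_point :: "real \<Rightarrow> real \<Rightarrow> (nat \<Rightarrow> real) measure" where
  "iid_two_point \<sigma> c = (\<Pi>\<^sub>M i\<in>UNIV. two_point \<sigma> c)"

definition const_arm_traj :: "nat \<Rightarrow> (nat \<Rightarrow> real) \<Rightarrow> traj" where
  "const_arm_traj k y = (0, (\<lambda>_. k), y)"

definition const_arm_law :: "nat \<Rightarrow> real \<Rightarrow> real \<Rightarrow> traj measure" where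
  "const_arm_law k \<sigma> c = distr (iid_two_point \<sigma> c) trajM (const_arm_traj k)"

definition pull_only :: "nat \<Rightarrow> nat \<Rightarrow> real \<Rightarrow> (nat \<Rightarrow> nat) \<Rightarrow> nat \<Rightarrow> real" where
  "pull_only k t w a j = (if j = k then 1 else 0)"

lemma prob_space_iid_two_point: "prob_space (iid_two_point \<sigma> c)"
  unfolding iid_two_point_def by (rule prob_space_PiM) (rule prob_space_two_point)

lemma sets_iid_two_point: "sets (iid_two_point \<sigma> c) = sets (\<Pi>\<^sub>M i\<in>UNIV. (borel :: real measure))"
  unfolding iid_two_point_def by (intro sets_PiM_cong) (auto simp: sets_two_point)

lemma space_iid_two_point [simp]: "space (iid_two_point \<sigma> c) = UNIV"
  using sets_eq_imp_space_eq[OF sets_iid_two_point] by (simp add: space_PiM)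

lemma nn_integral_iid_two_point_first:
  "f \<in> borel_measurable borel \<Longrightarrow> (\<integral>\<^sup>+y. f (y 0) \<partial>iid_two_point \<sigma> c) = (\<integral>\<^sup>+x. f x \<partial>two_point \<sigma> c)"
proof -
  assume [measurable]: "f \<in> borel_measurable borel"
  interpret product_prob_space "\<lambda>_::nat. two_point \<sigma> c" UNIV
    by (simp add: product_prob_space_def product_sigma_finite_def prob_space_two_point
        prob_space_imp_sigma_finite product_prob_space_axioms_def)
  have "distr (iid_two_point \<sigma> c) (two_point \<sigma> c) (\<lambda>y. y 0) = two_point \<sigma> c"
    unfolding iid_two_point_def by (rule PiM_component) simp
  then show ?thesis
    by (metis (no_types) \<open>f \<in> borel_measurable borel\<close> iid_two_point_def measurable_cong_sets
        measurable_component_singleton nn_integral_distr sets_two_point UNIV_I)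
qed

lemma const_arm_traj_simps [simp]:
  "Wof (const_arm_traj k y) = 0" "Aof (const_arm_traj k y) = (\<lambda>_. k)" "Yof (const_arm_traj k y) = y"
  by (simp_all add: const_arm_traj_def Wof_def Aof_def Yof_def)

lemma measurable_const_arm_traj [measurable]: "const_arm_traj k \<in> measurable (iid_two_point \<sigma> c) trajM"
proof -
  have "(\<lambda>y. y) \<in> measurable (iid_two_point \<sigma> c) (\<Pi>\<^sub>M i\<in>UNIV. (borel :: real measure))"
    using measurable_ident_sets[OF sets_iid_two_point] by simp
  then show ?thesis
    unfolding const_arm_traj_def trajM_def by (intro measurable_Pair measurable_const) (auto simp: space_PiM)
qed

lemma emeasure_const_arm_law:
  "X \<in> sets trajM \<Longrightarrow> emeasure (const_arm_law k \<sigma> c) X = emeasure (iid_two_point \<sigma> c) (const_arm_traj k -` X)"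
  unfolding const_arm_law_def by (subst emeasure_distr) auto

lemma vimage_const_arm_traj_pulled: "const_arm_traj k -` pulled t j = (if j = k then UNIV else {})"
  by auto

lemma emeasure_const_arm_law_pulled:
  assumes B: "data_event t B"
  shows "emeasure (const_arm_law k \<sigma> c) (B \<inter> pulled t j) =
    (\<integral>\<^sup>+\<omega>\<in>B. ennreal (pull_only k t (Wof \<omega>) (Aof \<omega>) j) \<partial>const_arm_law k \<sigma> c)"
proof -
  have B_traj: "B \<in> sets trajM"
    using B by (simp add: data_event_def)
  then have B_sets: "B \<in> sets (const_arm_law k \<sigma> c)"
    by (simp add: const_arm_law_def)
  have "(\<integral>\<^sup>+\<omega>\<in>B. ennreal (pull_only k t (Wof \<omega>) (Aof \<omega>) j) \<partial>const_arm_law k \<sigma> c) =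
      (\<integral>\<^sup>+\<omega>. (if j = k then 1 else 0) * indicator B \<omega> \<partial>const_arm_law k \<sigma> c)"
    by (simp add: pull_only_def)
  also have "\<dots> = (if j = k then emeasure (const_arm_law k \<sigma> c) B else 0)"
    using B_sets by (simp add: nn_integral_cmult_indicator)
  also have "\<dots> = emeasure (const_arm_law k \<sigma> c) (B \<inter> pulled t j)"
    using B_traj by (simp add: emeasure_const_arm_law vimage_Int vimage_const_arm_traj_pulled)
  finally show ?thesis ..
qed

lemma emeasure_const_arm_law_reward:
  assumes B: "data_event t B" and C: "C \<in> sets borel"
  shows "emeasure (const_arm_law k \<sigma> c) (B \<inter> pulled t k \<inter> {\<omega>. Yof \<omega> t \<in> C}) =
    emeasure (const_arm_law k \<sigma> c) (B \<inter> pulled t k) * emeasure (two_point \<sigma> c) C"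
proof -
  have [measurable]: "B \<in> sets trajM" "C \<in> sets borel"
    using B C by (simp_all add: data_event_def)
  let ?B' = "const_arm_traj k -` B"
  have "?B' \<in> sets (iid_two_point \<sigma> c)"
    using measurable_sets[OF measurable_const_arm_traj, of B k \<sigma> c] by simp
  moreover have "y' \<in> ?B'" if "\<forall>i<t. y i = y' i" "y \<in> ?B'" for y y'
  proof -
    have "prefix_eq t (const_arm_traj k y) (const_arm_traj k y')"
      using that(1) by (simp add: prefix_eq_def)
    then show ?thesis
      using B that(2) unfolding data_event_def by blast
  qed
  ultimately have "emeasure (iid_two_point \<sigma> c) (?B' \<inter> {y. y t \<in> C}) = emeasure (iid_two_point \<sigma> c) ?B' * emeasure (two_point \<sigma> c) C"
    unfolding iid_two_point_def using C
    by (intro emeasure_PiM_prefix_Int_component prob_space_two_point) (simp_all add: sets_two_point)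
  then show ?thesis
    by (simp add: emeasure_const_arm_law vimage_Int vimage_const_arm_traj_pulled vimage_Collect_eq)
qed

lemma bandit_law_const_arm:
  assumes "k \<in> {1..K}"
  shows "bandit_law K (P(k := two_point \<sigma> c)) (pull_only k) (const_arm_law k \<sigma> c)"
  unfolding bandit_law_def
proof (intro conjI allI impI)
  show "prob_space (const_arm_law k \<sigma> c)"
    unfolding const_arm_law_def by (rule prob_space.prob_space_distr[OF prob_space_iid_two_point]) simp
  show "sets (const_arm_law k \<sigma> c) = sets trajM"
    by (simp add: const_arm_law_def)
  fix t B j and C :: "real set" assume B: "data_event t B" and C: "C \<in> sets borel"
  then have [measurable]: "B \<in> sets trajM"
    by (simp add: data_event_def)
  show "emeasure (const_arm_law k \<sigma> c) (B \<inter> pulled t j \<inter> {\<omega>. Yof \<omega> t \<in> C}) =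
    emeasure (const_arm_law k \<sigma> c) (B \<inter> pulled t j) * emeasure ((P(k := two_point \<sigma> c)) j) C"
  proof (cases "j = k")
    case False
    then show ?thesis
      using C by (simp add: emeasure_const_arm_law vimage_Int vimage_const_arm_traj_pulled)
  qed (simp add: emeasure_const_arm_law_reward[OF B C])
qed (rule emeasure_const_arm_law_pulled)

lemma admissible_const_arm:
  assumes k: "k \<in> {1..K}"
  shows "(two_point \<sigma> c, pull_only k, const_arm_law k \<sigma> c, \<lambda>_. 1) \<in> admissible K k \<sigma> P"
proof -
  have "nonadaptive_alg K (pull_only k)"
    using k unfolding nonadaptive_alg_def pull_only_def by (auto simp: sum.delta')
  moreover have "AE \<omega> in const_arm_law k \<sigma> c. 1 \<le> Ncount k 1 \<omega>"
  proof -
    have "AE \<omega> in const_arm_law k \<sigma> c. Aof \<omega> 0 = k"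
      unfolding const_arm_law_def by (subst AE_distr_iff) simp_all
    then show ?thesis
      by eventually_elim (simp add: Ncount_Suc_0)
  qed
  ultimately show ?thesis
    using k var_class_two_point bandit_law_const_arm
    by (auto simp: admissible_def nonadaptive_stop_def)
qed

definition two_point_risk :: "(real \<Rightarrow> real) \<Rightarrow> real \<Rightarrow> real \<Rightarrow> real" where
  "two_point_risk e \<sigma> c = (e (c + \<sigma>) - c)\<^sup>2 / 2 + (e (c - \<sigma>) - c)\<^sup>2 / 2"

lemma risk_const_arm:
  assumes est: "is_estimator est"
  shows "risk k (mean (two_point \<sigma> c)) est (const_arm_law k \<sigma> c) (\<lambda>_. 1) =
    ennreal (two_point_risk (\<lambda>x. est 1 (const_arm_traj k (\<lambda>_. x))) \<sigma> c)"
proof -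
  define e where "e x = est 1 (const_arm_traj k (\<lambda>_. x))" for x
  have [measurable]: "est 1 \<in> borel_measurable trajM"
    using est by (simp add: is_estimator_def)
  have "(\<lambda>x::real. const_arm_traj k (\<lambda>_. x)) \<in> measurable borel trajM"
    unfolding const_arm_traj_def trajM_def
    by (intro measurable_Pair measurable_const measurable_PiM_single') (auto simp: space_PiM)
  then have [measurable]: "e \<in> borel_measurable borel"
    unfolding e_def[abs_def] by measurable
  have est_cong: "\<And>\<omega> \<omega>'. prefix_eq 1 \<omega> \<omega>' \<Longrightarrow> est 1 \<omega> = est 1 \<omega>'"
    using est unfolding is_estimator_def by blast
  have first_value: "est 1 (const_arm_traj k y) = e (y 0)" for y
    unfolding e_def by (rule est_cong) (simp add: prefix_eq_def)
  have "risk k (mean (two_point \<sigma> c)) est (const_arm_law k \<sigma> c) (\<lambda>_. 1) =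
      (\<integral>\<^sup>+y. ennreal (real (Ncount k 1 (const_arm_traj k y)) * (est 1 (const_arm_traj k y) - c)\<^sup>2) \<partial>iid_two_point \<sigma> c)"
    unfolding risk_def mean_two_point const_arm_law_def by (rule nn_integral_distr) measurable
  also have "\<dots> = (\<integral>\<^sup>+y. ennreal ((e (y 0) - c)\<^sup>2) \<partial>iid_two_point \<sigma> c)"
    using first_value by (intro nn_integral_cong) (simp add: Ncount_Suc_0)
  also have "\<dots> = (\<integral>\<^sup>+x. ennreal ((e x - c)\<^sup>2) \<partial>two_point \<sigma> c)"
    by (rule nn_integral_iid_two_point_first) measurable
  also have "\<dots> = ennreal ((e (c + \<sigma>) - c)\<^sup>2) * ennreal (1/2) + ennreal ((e (c - \<sigma>) - c)\<^sup>2) * ennreal (1/2)"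
    by (rule nn_integral_two_point) measurable
  also have "\<dots> = ennreal ((e (c + \<sigma>) - c)\<^sup>2 * (1/2)) + ennreal ((e (c - \<sigma>) - c)\<^sup>2 * (1/2))"
    by (simp only: ennreal_mult'[symmetric] zero_le_power2)
  also have "\<dots> = ennreal (two_point_risk e \<sigma> c)"
    unfolding two_point_risk_def by (subst ennreal_plus[symmetric]) simp_all
  finally show ?thesis
    unfolding e_def[abs_def] .
qed

text \<open>The problems at centres \<open>2m\<sigma>\<close> and \<open>2(m+1)\<sigma>\<close> share the support point \<open>(2m+1)\<sigma>\<close>, where no
  answer of the estimator is cheap for both.  The last term on the left is the part of the last risk
  that the next pair will use.\<close>
lemma two_point_risk_chain:
  "real n * \<sigma>\<^sup>2 + (e (2 * real (Suc n) * \<sigma> + \<sigma>) - 2 * real (Suc n) * \<sigma>)\<^sup>2 / 2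
    \<le> (\<Sum>m\<in>{1..Suc n}. two_point_risk e \<sigma> (2 * real m * \<sigma>))"
proof (induction n)
  case (Suc n)
  define c where "c = 2 * real (Suc n) * \<sigma>"
  have "2 * \<sigma>\<^sup>2 \<le> (e (c + \<sigma>) - c)\<^sup>2 + (e (c + \<sigma>) - (c + 2 * \<sigma>))\<^sup>2"
  proof -
    have "(e (c + \<sigma>) - c)\<^sup>2 + (e (c + \<sigma>) - (c + 2 * \<sigma>))\<^sup>2 = 2 * (e (c + \<sigma>) - c - \<sigma>)\<^sup>2 + 2 * \<sigma>\<^sup>2"
      by (simp add: power2_eq_square algebra_simps)
    then show ?thesis
      by simp
  qed
  moreover have "two_point_risk e \<sigma> (2 * real (Suc (Suc n)) * \<sigma>) =
      (e (2 * real (Suc (Suc n)) * \<sigma> + \<sigma>) - 2 * real (Suc (Suc n)) * \<sigma>)\<^sup>2 / 2 + (e (c + \<sigma>) - (c + 2 * \<sigma>))\<^sup>2 / 2"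
    unfolding two_point_risk_def c_def by (simp add: algebra_simps)
  ultimately show ?case
    using Suc.IH by (simp add: c_def algebra_simps)
qed (simp add: two_point_risk_def)

lemma variance_le_of_two_point_risk_le:
  assumes bound: "\<And>c. two_point_risk e \<sigma> c \<le> \<rho>"
  shows "\<sigma>\<^sup>2 \<le> \<rho>"
proof (rule ccontr)
  assume "\<not> \<sigma>\<^sup>2 \<le> \<rho>"
  then obtain n :: nat where n: "\<rho> / (\<sigma>\<^sup>2 - \<rho>) < real n"
    using reals_Archimedean2 by blast
  have "real n * \<sigma>\<^sup>2 \<le> (\<Sum>m\<in>{1..Suc n}. two_point_risk e \<sigma> (2 * real m * \<sigma>))"
    using two_point_risk_chain[of n \<sigma> e] by (smt (verit) zero_le_power2 divide_nonneg_pos)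
  also have "\<dots> \<le> real (Suc n) * \<rho>"
    using sum_bounded_above[of "{1..Suc n}" "\<lambda>m. two_point_risk e \<sigma> (2 * real m * \<sigma>)" \<rho>] bound by simp
  finally show False
    using n \<open>\<not> \<sigma>\<^sup>2 \<le> \<rho>\<close> by (simp add: field_simps algebra_simps)
qed

lemma SUP_risk_ge_variance:
  assumes est: "is_estimator est" and k: "k \<in> {1..K}"
  shows "ennreal (\<sigma>\<^sup>2) \<le> (SUP (Pk, nu, Q, T) \<in> admissible K k \<sigma> P. risk k (mean Pk) est Q T)"
    (is "_ \<le> ?R")
proof -
  let ?e = "\<lambda>x. est 1 (const_arm_traj k (\<lambda>_. x))"
  have risk_le: "ennreal (two_point_risk ?e \<sigma> c) \<le> ?R" for c
  proof -
    have "risk k (mean (two_point \<sigma> c)) est (const_arm_law k \<sigma> c) (\<lambda>_. 1) \<le> ?R"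
      by (rule SUP_upper2[OF admissible_const_arm[OF k, of \<sigma> c P]]) simp
    then show ?thesis
      unfolding risk_const_arm[OF est] .
  qed
  show ?thesis
  proof (cases ?R)
    case (real \<rho>)
    then have "two_point_risk ?e \<sigma> c \<le> \<rho>" for c
      using risk_le[of c] by (simp add: ennreal_le_iff del: ennreal_plus)
    then have "\<sigma>\<^sup>2 \<le> \<rho>"
      by (rule variance_le_of_two_point_risk_le)
    then show ?thesis
      using real by (simp add: ennreal_leI)
  next
    case top
    then show ?thesis
      by (simp only: top_greatest)
  qed
qed

theorem proposition2:
  fixes K k :: nat and \<sigma> :: real and P :: "nat \<Rightarrow> real measure"
  assumes "k \<in> {1..K}" and "\<sigma> > 0"
    and "\<forall>j\<in>{1..K} - {k}. arm_dist (P j)"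
  shows "(INF est \<in> {est. is_estimator est}.
            SUP (Pk, nu, Q, T) \<in> admissible K k \<sigma> P. risk k (mean Pk) est Q T)
           = ennreal (\<sigma>\<^sup>2) \<and>
         (\<forall>(Pk, nu, Q, T) \<in> admissible K k \<sigma> P.
           risk k (mean Pk) (sample_mean k) Q T = ennreal (\<sigma>\<^sup>2))"
proof -
  have sample_mean: "risk k (mean Pk) (sample_mean k) Q T = ennreal (\<sigma>\<^sup>2)"
    if "(Pk, nu, Q, T) \<in> admissible K k \<sigma> P" for Pk nu Q T
  proof -
    interpret bandit_arm K "P(k := Pk)" nu Q k \<sigma>
      using that assms(1) by unfold_locales (simp_all add: admissible_def)
    show ?thesis
      using that risk_sample_mean by (simp add: admissible_def)
  qed
  have "(INF est \<in> {est. is_estimator est}.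
      SUP (Pk, nu, Q, T) \<in> admissible K k \<sigma> P. risk k (mean Pk) est Q T) \<le> ennreal (\<sigma>\<^sup>2)"
    using sample_mean by (intro INF_lower2[of "sample_mean k"] SUP_least) (auto simp: is_estimator_sample_mean)
  moreover have "ennreal (\<sigma>\<^sup>2) \<le> (INF est \<in> {est. is_estimator est}.
      SUP (Pk, nu, Q, T) \<in> admissible K k \<sigma> P. risk k (mean Pk) est Q T)"
    using assms(1) by (intro INF_greatest) (simp add: SUP_risk_ge_variance)
  ultimately show ?thesis
    using sample_mean by (auto intro: antisym)
qed

end
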